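(* Let $I\colon T_{\mathrm{Graph}}\leadsto T$ be an open interpretation, where $T$ is a canonical theory. Let $T'$ be the theory obtained from the disjoint union $T_{\mathrm{Graph}}\cup T$ (with $E$ the predicate symbol of $T_{\mathrm{Graph}}$) by adding the axiom $\forall x\forall y\,(E(x,y)\leftrightarrow I(E)(x,y))$. Let $\mathcal{L}$ be the language of $T'$ and let $\mathcal{F}$ be a family of canonical structures on $\mathcal{L}$ such that $T'=\mathrm{Forb}_{T_{\mathcal L}}(\mathcal F)$. Then $$\chi(I)=\begin{cases}\infty, & \text{if } \mathcal{C}^E_{\mathcal L}\not\subseteq\mathcal{U}_1(\mathcal F),\\ \min\{\ell\in\mathbb{N}_+:\mathcal{T}^E_{\ell,\mathcal L}\subseteq\mathcal U_\ell(\mathcal F)\}, & \text{otherwise},\end{cases}$$ and in the second case the minimum exists (the set is non-empty). Furthermore, if $T$ itself is obtained from a theory $T_{\mathrm{Graph}}\cup T_0$ by adding axioms (so its language contains $E$) and $I$ acts identically on $E$ (i.e. $I(E)(x,y)=E(x,y)$), then the same conclusion holds with $T'$ replaced by $T$ (with $\mathcal L$ the language of $T$ and $\mathcal F$ such that $T=\mathrm{Forb}_{T_{\mathcal L}}(\mathcal F)$).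
   Context: All languages are finite first-order relational languages; each predicate $P$ has arity $k(P)\in\mathbb{N}_+$. Structures are finite and canonical (no predicate holds on a tuple with a repeated entry); $V(M)$ is the vertex set, $(V)_k$ the set of injective maps $[k]\to V$, $R_P(M)\subseteq(V(M))_{k(P)}$ the tuples satisfying $P$, $M|_U$ the induced substructure. Theories are universal and canonical. $T_{\mathcal L}$ is the theory whose models are all canonical structures on $\mathcal L$; for a family $\mathcal F$ of canonical structures on $\mathcal L$, $\mathrm{Forb}_{T_{\mathcal L}}(\mathcal F)$ is the theory whose models are the canonical structures on $\mathcal L$ with no induced substructure isomorphic to a member of $\mathcal F$. $T_1\cup T_2$ denotes the theory over the disjoint union of the languages with the axioms of both. $T_{\mathrm{Graph}}$: language $\{E\}$, $E$ binary, symmetric; models are simple graphs. An open interpretation $I\colon T_{\mathrm{Graph}}\leadsto T$ assigns to $E$ a quantifier-free formula $I(E)(x,y)$ in the language of $T$ such that $T$ proves it symmetric and irreflexive; $I(N)$ is the graph on $V(N)$ with ordered edges the injective pairs satisfying $I(E)$. $\mathcal M_n[T]$: models of $T$ on $n$ vertices up to isomorphism. $T_{n,\ell}$: complete $\ell$-partite graph on $n$ vertices with parts of sizes $\lfloor n/\ell\rfloor$ or $\lceil n/\ell\rceil$; $G\subseteq H$ means an injection $V(G)\to V(H)$ mapping edges to edges. Abstract chromatic number: $\chi(I)=\sup(\{\ell\in\mathbb{N}_+:\forall n\ \exists N\in\mathcal M_n[T],\ T_{n,\ell}\subseteq I(N)\}\cup\{0\})+1$. Split orders: an $\ell$-split order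 over $V$ is $(f,\preceq)$ with $f\colon V\to[\ell]$ and $\preceq$ a reflexive partial order on $V$ such that $v,w$ are comparable iff $f(v)=f(w)$; $\mathcal S_{\ell,V}$ is the set of these, $\mathcal S_{\ell,k}=\mathcal S_{\ell,[k]}$ (for $\ell=1$, elements of $\mathcal S_{1,V}$ are identified with total orders on $V$). For an injection $g\colon W\to V$, $w_1\preceq_g w_2\iff g(w_1)\preceq g(w_2)$. An $\ell$-Ramsey pattern on $\mathcal L$ is a map $Q\colon P\mapsto Q_P\subseteq\mathcal S_{\ell,k(P)}$; $\mathcal P_{\ell,\mathcal L}$ is the set of these. $M$ is $Q$-uniform w.r.t. $(f,\preceq)\in\mathcal S_{\ell,V(M)}$ if $R_P(M)=\{\alpha\in(V(M))_{k(P)}:(f\circ\alpha,\preceq_\alpha)\in Q_P\}$ for all $P\in\mathcal L$. $\mathcal U_\ell(M)$ is the set of $Q\in\mathcal P_{\ell,\mathcal L}$ such that $M$ is $Q$-uniform w.r.t. some $(f,\preceq)\in\mathcal S_{\ell,V(M)}$; $\mathcal U_\ell(\mathcal F)=\bigcup_{M\in\mathcal F}\mathcal U_\ell(M)$. For $E\in\mathcal L$ binary: $\mathcal C^E_{\mathcal L}$ is the set of $Q\in\mathcal P_{1,\mathcal L}$ with $Q_E=\mathcal S_{1,2}$ ($E$-complete patterns); $\mathcal T^E_{\ell,\mathcal L}$ is the set of $Q\in\mathcal P_{\ell,\mathcal L}$ with $Q_E=\{(g,\preceq)\in\mathcal S_{\ell,2}: g\text{ injective}\}$ ($E$-Turán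 patterns). *)

theory Defs
  imports Main "HOL-Library.Extended_Nat"
begin

text \<open>Structures have vertex set a finite subset of nat; a tuple in
  (V)_k is a distinct list of length k over V (index i of the list = element i+1 of [k]).\<close>

record 'p struc =
  verts :: "nat set"
  rels  :: "'p \<Rightarrow> nat list set"

definition lang_ok :: "'p set \<Rightarrow> ('p \<Rightarrow> nat) \<Rightarrow> bool" where
  "lang_ok L k \<longleftrightarrow> finite L \<and> (\<forall>P\<in>L. k P \<ge> 1)"

definition inj_tuples :: "nat set \<Rightarrow> nat \<Rightarrow> nat list set" where
  "inj_tuples V n = {\<alpha>. distinct \<alpha> \<and> length \<alpha> = n \<and> set \<alpha> \<subseteq> V}"

definition canonical :: "'p set \<Rightarrow> ('p \<Rightarrow> nat) \<Rightarrow> 'p struc \<Rightarrow> bool" where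
  "canonical L k M \<longleftrightarrow> finite (verts M) \<and>
     (\<forall>P\<in>L. rels M P \<subseteq> inj_tuples (verts M) (k P)) \<and>
     (\<forall>P. P \<notin> L \<longrightarrow> rels M P = {})"

definition induced :: "'p struc \<Rightarrow> nat set \<Rightarrow> 'p struc" where
  "induced M U = \<lparr>verts = U, rels = (\<lambda>P. {\<alpha> \<in> rels M P. set \<alpha> \<subseteq> U})\<rparr>"

definition iso :: "'p struc \<Rightarrow> 'p struc \<Rightarrow> bool" where
  "iso M N \<longleftrightarrow> (\<exists>h. bij_betw h (verts M) (verts N) \<and>
     (\<forall>P \<alpha>. set \<alpha> \<subseteq> verts M \<longrightarrow> (map h \<alpha> \<in> rels N P \<longleftrightarrow> \<alpha> \<in> rels M P)))"

text \<open>A canonical (universal) theory is represented by its class of finite models: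
  canonical structures, closed under induced substructures and isomorphism.\<close>

definition canon_theory :: "'p set \<Rightarrow> ('p \<Rightarrow> nat) \<Rightarrow> 'p struc set \<Rightarrow> bool" where
  "canon_theory L k Mod \<longleftrightarrow> lang_ok L k \<and>
     (\<forall>M\<in>Mod. canonical L k M) \<and>
     (\<forall>M\<in>Mod. \<forall>U. U \<subseteq> verts M \<longrightarrow> induced M U \<in> Mod) \<and>
     (\<forall>M\<in>Mod. \<forall>N. canonical L k N \<and> iso N M \<longrightarrow> N \<in> Mod)"

definition Forb :: "'p set \<Rightarrow> ('p \<Rightarrow> nat) \<Rightarrow> 'p struc set \<Rightarrow> 'p struc set" where
  "Forb L k F = {M. canonical L k M \<and>
     (\<forall>U. U \<subseteq> verts M \<longrightarrow> (\<forall>G\<in>F. \<not> iso (induced M U) G))}"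

datatype 'p qf = QTrue | QAtom 'p "nat list" | QEq nat nat | QNot "'p qf" | QAnd "'p qf" "'p qf"

fun qf_sat :: "'p struc \<Rightarrow> (nat \<Rightarrow> nat) \<Rightarrow> 'p qf \<Rightarrow> bool" where
  "qf_sat M \<sigma> QTrue = True"
| "qf_sat M \<sigma> (QAtom P vs) = (map \<sigma> vs \<in> rels M P)"
| "qf_sat M \<sigma> (QEq i j) = (\<sigma> i = \<sigma> j)"
| "qf_sat M \<sigma> (QNot \<phi>) = (\<not> qf_sat M \<sigma> \<phi>)"
| "qf_sat M \<sigma> (QAnd \<phi> \<psi>) = (qf_sat M \<sigma> \<phi> \<and> qf_sat M \<sigma> \<psi>)"

fun qf_wf :: "'p set \<Rightarrow> ('p \<Rightarrow> nat) \<Rightarrow> nat \<Rightarrow> 'p qf \<Rightarrow> bool" where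
  "qf_wf L k m QTrue = True"
| "qf_wf L k m (QAtom P vs) = (P \<in> L \<and> length vs = k P \<and> (\<forall>v\<in>set vs. v < m))"
| "qf_wf L k m (QEq i j) = (i < m \<and> j < m)"
| "qf_wf L k m (QNot \<phi>) = qf_wf L k m \<phi>"
| "qf_wf L k m (QAnd \<phi> \<psi>) = (qf_wf L k m \<phi> \<and> qf_wf L k m \<psi>)"

definition asg :: "nat \<Rightarrow> nat \<Rightarrow> nat \<Rightarrow> nat" where
  "asg x y = (\<lambda>i. if i = 0 then x else y)"

text \<open>I(E) = phi(x0,x1) is an open interpretation T_Graph ~> T: T proves phi symmetric and
  irreflexive (for universal T this is equivalent to holding in all finite models).\<close>
definition open_interp :: "'p set \<Rightarrow> ('p \<Rightarrow> nat) \<Rightarrow> 'p struc set \<Rightarrow> 'p qf \<Rightarrow> bool" where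
  "open_interp L k Mod \<phi> \<longleftrightarrow> qf_wf L k 2 \<phi> \<and>
     (\<forall>N\<in>Mod. \<forall>x\<in>verts N. \<forall>y\<in>verts N.
        (qf_sat N (asg x y) \<phi> \<longleftrightarrow> qf_sat N (asg y x) \<phi>) \<and> \<not> qf_sat N (asg x x) \<phi>)"

definition interp_edge :: "'p qf \<Rightarrow> 'p struc \<Rightarrow> nat \<Rightarrow> nat \<Rightarrow> bool" where
  "interp_edge \<phi> N x y \<longleftrightarrow> x \<in> verts N \<and> y \<in> verts N \<and> x \<noteq> y \<and> qf_sat N (asg x y) \<phi>"

section \<open>The theory T' = T_Graph \<union> T + (E <-> I(E)); E is the symbol None\<close>

definition lang' :: "'p set \<Rightarrow> 'p option set" where
  "lang' L = insert None (Some ` L)"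

definition arity' :: "('p \<Rightarrow> nat) \<Rightarrow> 'p option \<Rightarrow> nat" where
  "arity' k = case_option 2 k"

definition reduct :: "'p option struc \<Rightarrow> 'p struc" where
  "reduct N = \<lparr>verts = verts N, rels = (\<lambda>P. rels N (Some P))\<rparr>"

definition Tprime_models :: "'p set \<Rightarrow> ('p \<Rightarrow> nat) \<Rightarrow> 'p struc set \<Rightarrow> 'p qf \<Rightarrow> 'p option struc set" where
  "Tprime_models L k Mod \<phi> = {N. canonical (lang' L) (arity' k) N \<and> reduct N \<in> Mod \<and>
     (\<forall>x y. [x, y] \<in> rels N None \<longrightarrow> [y, x] \<in> rels N None) \<and>
     (\<forall>x\<in>verts N. \<forall>y\<in>verts N. [x, y] \<in> rels N None \<longleftrightarrow> qf_sat (reduct N) (asg x y) \<phi>)}"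

text \<open>Turan graph T_{n,l} on {0..<n}: parts are the residue classes mod l
  (sizes floor(n/l) or ceil(n/l)).\<close>
definition turan_edge :: "nat \<Rightarrow> nat \<Rightarrow> nat \<Rightarrow> nat \<Rightarrow> bool" where
  "turan_edge n l i j \<longleftrightarrow> i < n \<and> j < n \<and> i mod l \<noteq> j mod l"

definition turan_sub :: "nat \<Rightarrow> nat \<Rightarrow> 'p qf \<Rightarrow> 'p struc \<Rightarrow> bool" where
  "turan_sub n l \<phi> N \<longleftrightarrow> (\<exists>g. inj_on g {..<n} \<and> g ` {..<n} \<subseteq> verts N \<and>
     (\<forall>i j. turan_edge n l i j \<longrightarrow> interp_edge \<phi> N (g i) (g j)))"

definition chi :: "'p struc set \<Rightarrow> 'p qf \<Rightarrow> enat" where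
  "chi Mod \<phi> = Sup (enat ` {l. l \<ge> 1 \<and> (\<forall>n. \<exists>N\<in>Mod. card (verts N) = n \<and> turan_sub n l \<phi> N)} \<union> {0}) + 1"

definition split_order :: "nat \<Rightarrow> 'a set \<Rightarrow> ('a \<Rightarrow> nat) \<Rightarrow> ('a \<times> 'a) set \<Rightarrow> bool" where
  "split_order l V f r \<longleftrightarrow> (\<forall>v\<in>V. f v \<in> {1..l}) \<and> r \<subseteq> V \<times> V \<and> refl_on V r \<and> antisym r \<and> trans r \<and>
     (\<forall>v\<in>V. \<forall>w\<in>V. ((v, w) \<in> r \<or> (w, v) \<in> r) \<longleftrightarrow> f v = f w)"

text \<open>S_{l,k}, with [k] represented by {0..<k} and f extended by 0 outside\<close>
definition S :: "nat \<Rightarrow> nat \<Rightarrow> ((nat \<Rightarrow> nat) \<times> (nat \<times> nat) set) set" where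
  "S l k = {(f, r). split_order l {..<k} f r \<and> (\<forall>i. i \<ge> k \<longrightarrow> f i = 0)}"

definition pull :: "(nat \<Rightarrow> nat) \<Rightarrow> (nat \<times> nat) set \<Rightarrow> nat list \<Rightarrow> (nat \<Rightarrow> nat) \<times> (nat \<times> nat) set" where
  "pull f r \<alpha> = ((\<lambda>i. if i < length \<alpha> then f (\<alpha> ! i) else 0),
                 {(i, j). i < length \<alpha> \<and> j < length \<alpha> \<and> (\<alpha> ! i, \<alpha> ! j) \<in> r})"

definition ramsey_patterns :: "nat \<Rightarrow> 'p set \<Rightarrow> ('p \<Rightarrow> nat) \<Rightarrow> ('p \<Rightarrow> ((nat \<Rightarrow> nat) \<times> (nat \<times> nat) set) set) set" where
  "ramsey_patterns l L k = {Q. (\<forall>P\<in>L. Q P \<subseteq> S l (k P)) \<and> (\<forall>P. P \<notin> L \<longrightarrow> Q P = {})}"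

definition uniform :: "'p set \<Rightarrow> ('p \<Rightarrow> nat) \<Rightarrow> 'p struc \<Rightarrow> ('p \<Rightarrow> ((nat \<Rightarrow> nat) \<times> (nat \<times> nat) set) set)
    \<Rightarrow> (nat \<Rightarrow> nat) \<Rightarrow> (nat \<times> nat) set \<Rightarrow> bool" where
  "uniform L k M Q f r \<longleftrightarrow> (\<forall>P\<in>L. rels M P = {\<alpha> \<in> inj_tuples (verts M) (k P). pull f r \<alpha> \<in> Q P})"

definition U :: "nat \<Rightarrow> 'p set \<Rightarrow> ('p \<Rightarrow> nat) \<Rightarrow> 'p struc \<Rightarrow> ('p \<Rightarrow> ((nat \<Rightarrow> nat) \<times> (nat \<times> nat) set) set) set" where
  "U l L k M = {Q \<in> ramsey_patterns l L k. \<exists>f r. split_order l (verts M) f r \<and> uniform L k M Q f r}"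

definition U_fam :: "nat \<Rightarrow> 'p set \<Rightarrow> ('p \<Rightarrow> nat) \<Rightarrow> 'p struc set \<Rightarrow> ('p \<Rightarrow> ((nat \<Rightarrow> nat) \<times> (nat \<times> nat) set) set) set" where
  "U_fam l L k F = (\<Union>M\<in>F. U l L k M)"

definition complete_patterns :: "'p set \<Rightarrow> ('p \<Rightarrow> nat) \<Rightarrow> 'p \<Rightarrow> ('p \<Rightarrow> ((nat \<Rightarrow> nat) \<times> (nat \<times> nat) set) set) set" where
  "complete_patterns L k E = {Q \<in> ramsey_patterns 1 L k. Q E = S 1 2}"

definition turan_patterns :: "nat \<Rightarrow> 'p set \<Rightarrow> ('p \<Rightarrow> nat) \<Rightarrow> 'p \<Rightarrow> ('p \<Rightarrow> ((nat \<Rightarrow> nat) \<times> (nat \<times> nat) set) set) set" where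
  "turan_patterns l L k E = {Q \<in> ramsey_patterns l L k. Q E = {(g, r) \<in> S l 2. inj_on g {..<2}}}"

end

theory Submission
  imports Defs "HOL-Library.Ramsey"
begin

type_synonym split_pattern = "(nat \<Rightarrow> nat) \<times> (nat \<times> nat) set"

lemma sorted_list_of_set_nth_card_less:
  fixes S :: "'a::linorder set"
  assumes "finite S" "x \<in> S"
  shows "sorted_list_of_set S ! card {y \<in> S. y < x} = x"
proof -
  define xs where "xs = sorted_list_of_set S"
  have sorted: "sorted_wrt (<) xs" and set_xs: "set xs = S" and dist: "distinct xs"
    using assms(1) by (simp_all add: xs_def)
  obtain i where i: "i < length xs" "xs ! i = x"
    using assms set_xs by (metis in_set_conv_nth)
  have less_iff: "xs ! j < x \<longleftrightarrow> j < i" if "j < length xs" for j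
  proof (cases j i rule: linorder_cases)
    case less
    then show ?thesis using sorted_wrt_nth_less[OF sorted less i(1)] i by simp
  next
    case greater
    then show ?thesis using sorted_wrt_nth_less[OF sorted greater that] i by simp
  qed (use i in simp)
  have "{y \<in> S. y < x} = (!) xs ` {..<i}"
  proof (intro equalityI subsetI)
    fix y assume "y \<in> {y \<in> S. y < x}"
    then obtain j where "j < length xs" "y = xs ! j" "xs ! j < x"
      by (auto simp: set_xs[symmetric] in_set_conv_nth)
    then show "y \<in> (!) xs ` {..<i}"
      using less_iff by auto
  next
    fix y assume "y \<in> (!) xs ` {..<i}"
    then show "y \<in> {y \<in> S. y < x}"
      using i less_iff by (auto simp: set_xs[symmetric])
  qed
  moreover have "inj_on ((!) xs) {..<i}"
    using dist i by (auto simp: inj_on_def nth_eq_iff_index_eq)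
  ultimately show ?thesis
    using i by (simp add: card_image xs_def)
qed

lemma sorted_list_of_set_image_nth:
  fixes \<nu> :: "'a::linorder \<Rightarrow> 'b::linorder"
  assumes mono: "strict_mono_on B \<nu>" and "finite A" "A \<subseteq> B" "a \<in> A"
  shows "sorted_list_of_set (\<nu> ` A) ! card {b \<in> A. b < a} = \<nu> a"
proof -
  have "\<nu> b < \<nu> a \<longleftrightarrow> b < a" if "b \<in> A" for b
    using strict_mono_on_less[OF mono] assms that by blast
  then have "{y \<in> \<nu> ` A. y < \<nu> a} = \<nu> ` {b \<in> A. b < a}"
    by auto
  moreover have "inj_on \<nu> {b \<in> A. b < a}"
    using \<open>A \<subseteq> B\<close> by (auto intro: inj_on_subset[OF strict_mono_on_imp_inj_on[OF mono]])
  ultimately have "card {y \<in> \<nu> ` A. y < \<nu> a} = card {b \<in> A. b < a}"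
    by (simp add: card_image)
  then show ?thesis
    using sorted_list_of_set_nth_card_less[of "\<nu> ` A" "\<nu> a"] assms by simp
qed

lemma strict_mono_on_nth_sorted_list_of_set:
  "finite H \<Longrightarrow> strict_mono_on {..<card H} ((!) (sorted_list_of_set H))"
  by (auto simp: strict_mono_on_def intro: sorted_wrt_nth_less)

lemma card_set_filter_conv_nth:
  "distinct xs \<Longrightarrow> card {x \<in> set xs. P x} = card {i. i < length xs \<and> P (xs ! i)}"
  using distinct_length_filter[of xs P] length_filter_conv_card[of P xs]
  by (simp add: Collect_conj_eq Int_commute)

lemma ramsey_homogeneous_subset:
  assumes "finite C"
  shows "\<exists>R::nat. \<forall>col. (\<forall>S. col S \<in> C) \<longrightarrow>
           (\<exists>H \<subseteq> {..<R}. card H = M \<and> (\<forall>S1\<in>nsets H D. \<forall>S2\<in>nsets H D. col S1 = col S2))"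
proof -
  obtain enc where enc: "bij_betw enc C {..<card C}"
    using ex_bij_betw_finite_nat[OF assms] by (auto simp: atLeast0LessThan)
  obtain R :: nat where R: "partn_lst {..<R} (replicate (card C) M) D"
    using ramsey_full[of "replicate (card C) M" D] by blast
  show ?thesis
  proof (intro exI[of _ R] allI impI)
    fix col :: "nat set \<Rightarrow> _" assume col: "\<forall>S. col S \<in> C"
    have "enc \<circ> col \<in> nsets {..<R} D \<rightarrow> {..<length (replicate (card C) M)}"
      using enc col by (auto simp: bij_betw_def)
    then obtain i H where "i < card C" and H: "H \<in> nsets {..<R} M"
      and hom: "(enc \<circ> col) ` nsets H D \<subseteq> {i}"
      using partn_lstE[OF R] by (metis length_replicate nth_replicate)
    have "col S1 = col S2" if "S1 \<in> nsets H D" "S2 \<in> nsets H D" for S1 S2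
      using hom that col inj_onD[OF bij_betw_imp_inj_on[OF enc]] by (metis comp_apply image_subset_iff singletonD)
    moreover have "H \<subseteq> {..<R}" "card H = M"
      using H by (auto simp: nsets_def)
    ultimately show "\<exists>H \<subseteq> {..<R}. card H = M \<and> (\<forall>S1\<in>nsets H D. \<forall>S2\<in>nsets H D. col S1 = col S2)"
      by blast
  qed
qed

lemma ramsey_homogeneous_enumeration:
  fixes M D :: nat
  assumes "finite C"
  shows "\<exists>R::nat. \<forall>col. (\<forall>S. col S \<in> C) \<longrightarrow> (\<exists>\<nu>. strict_mono_on {..<M} \<nu> \<and> \<nu> ` {..<M} \<subseteq> {..<R} \<and>
           (\<forall>A\<subseteq>{..<M}. \<forall>B\<subseteq>{..<M}. card A = D \<longrightarrow> card B = D \<longrightarrow> col (\<nu> ` A) = col (\<nu> ` B)))"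
proof -
  obtain R :: nat where R: "\<forall>col. (\<forall>S. col S \<in> C) \<longrightarrow>
      (\<exists>H \<subseteq> {..<R}. card H = M \<and> (\<forall>S1\<in>nsets H D. \<forall>S2\<in>nsets H D. col S1 = col S2))"
    using ramsey_homogeneous_subset[OF assms] by blast
  show ?thesis
  proof (intro exI[of _ R] allI impI)
    fix col :: "nat set \<Rightarrow> _" assume "\<forall>S. col S \<in> C"
    with R[THEN spec[where x = col]] obtain H where H: "H \<subseteq> {..<R}" "card H = M"
      and hom: "\<forall>S1\<in>nsets H D. \<forall>S2\<in>nsets H D. col S1 = col S2"
      by blast
    have "finite H"
      using H(1) finite_subset by blast
    define \<nu> where "\<nu> = (!) (sorted_list_of_set H)"
    have mono: "strict_mono_on {..<M} \<nu>"
      using strict_mono_on_nth_sorted_list_of_set[OF \<open>finite H\<close>] H(2) by (simp add: \<nu>_def)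
    have \<nu>_H: "\<nu> ` {..<M} \<subseteq> H"
    proof (rule image_subsetI)
      fix i assume "i \<in> {..<M}"
      then show "\<nu> i \<in> H"
        using nth_mem[of i "sorted_list_of_set H"] \<open>finite H\<close> H(2) by (simp add: \<nu>_def)
    qed
    have in_nsets: "\<nu> ` A \<in> nsets H D" if "A \<subseteq> {..<M}" "card A = D" for A
    proof -
      have "inj_on \<nu> A"
        using strict_mono_on_imp_inj_on[OF mono] that(1) by (rule inj_on_subset)
      then show ?thesis
        using that \<nu>_H finite_subset[OF that(1)] by (auto simp: nsets_def card_image)
    qed
    show "\<exists>\<nu>. strict_mono_on {..<M} \<nu> \<and> \<nu> ` {..<M} \<subseteq> {..<R} \<and>
        (\<forall>A\<subseteq>{..<M}. \<forall>B\<subseteq>{..<M}. card A = D \<longrightarrow> card B = D \<longrightarrow> col (\<nu> ` A) = col (\<nu> ` B))"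
    proof (intro exI[of _ \<nu>] conjI allI impI)
      show "strict_mono_on {..<M} \<nu>" "\<nu> ` {..<M} \<subseteq> {..<R}"
        using mono \<nu>_H H(1) by auto
      fix A B assume "A \<subseteq> {..<M}" "B \<subseteq> {..<M}" "card A = D" "card B = D"
      then show "col (\<nu> ` A) = col (\<nu> ` B)"
        using hom in_nsets by blast
    qed
  qed
qed

section \<open>Uniform grids\<close>

text \<open>The grid \<open>{..<l} \<times> {..<m}\<close> carries the \<open>l\<close>-split order whose parts are the
  columns, column \<open>c\<close> having colour \<open>c + 1\<close> and being ordered by the second coordinate;
  \<open>grid_pattern \<beta>\<close> is the pattern of a tuple \<open>\<beta>\<close> of grid points with respect to it.\<close>

definition grid_tuples :: "nat \<Rightarrow> nat \<Rightarrow> nat \<Rightarrow> (nat \<times> nat) list set" where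
  "grid_tuples l m t = {\<beta>. distinct \<beta> \<and> length \<beta> = t \<and> set \<beta> \<subseteq> {..<l} \<times> {..<m}}"

definition grid_pattern :: "(nat \<times> nat) list \<Rightarrow> split_pattern" where
  "grid_pattern \<beta> = ((\<lambda>i. if i < length \<beta> then fst (\<beta> ! i) + 1 else 0),
     {(i, j). i < length \<beta> \<and> j < length \<beta> \<and> fst (\<beta> ! i) = fst (\<beta> ! j) \<and> snd (\<beta> ! i) \<le> snd (\<beta> ! j)})"

lemma grid_pattern_in_S:
  assumes "\<beta> \<in> grid_tuples l m t"
  shows "grid_pattern \<beta> \<in> S l t"
proof -
  have dist: "distinct \<beta>" and len: "length \<beta> = t" and grid: "set \<beta> \<subseteq> {..<l} \<times> {..<m}"
    using assms by (auto simp: grid_tuples_def)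
  have fst_less: "fst (\<beta> ! i) < l" if "i < t" for i
    using grid len that by (auto dest!: nth_mem)
  have inj: "x = y" if "x < t" "y < t" "fst (\<beta> ! x) = fst (\<beta> ! y)" "snd (\<beta> ! x) = snd (\<beta> ! y)" for x y
    using that dist len by (metis nth_eq_iff_index_eq prod_eqI)
  let ?f = "\<lambda>i. if i < length \<beta> then fst (\<beta> ! i) + 1 else 0"
  let ?r = "{(i, j). i < length \<beta> \<and> j < length \<beta> \<and> fst (\<beta> ! i) = fst (\<beta> ! j) \<and> snd (\<beta> ! i) \<le> snd (\<beta> ! j)}"
  have "split_order l {..<t} ?f ?r"
    unfolding split_order_def
  proof (intro conjI)
    show "\<forall>v\<in>{..<t}. ?f v \<in> {1..l}"
      using fst_less len by (auto simp: Suc_le_eq)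
    show "?r \<subseteq> {..<t} \<times> {..<t}" "refl_on {..<t} ?r"
      using len by (auto simp: refl_on_def)
    show "antisym ?r"
      using inj len by (auto simp: antisym_def)
    show "trans ?r"
      by (auto simp: trans_def)
    show "\<forall>v\<in>{..<t}. \<forall>w\<in>{..<t}. ((v, w) \<in> ?r \<or> (w, v) \<in> ?r) = (?f v = ?f w)"
      using len by auto
  qed
  moreover have "\<forall>i\<ge>t. ?f i = 0"
    using len by auto
  ultimately show ?thesis
    by (simp add: S_def grid_pattern_def)
qed

lemma inj_on_less_2_iff: "inj_on g {..<2::nat} \<longleftrightarrow> g 0 \<noteq> g 1"
  using inj_onD[of g "{..<2}" 0 1] by (auto simp: inj_on_def less_2_cases_iff)

lemma S2_eqI:
  assumes "\<tau> \<in> S l 2" "\<tau>' \<in> S l 2" "fst \<tau> 0 = fst \<tau>' 0" "fst \<tau> 1 = fst \<tau>' 1"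
    and "(0, 1) \<in> snd \<tau> \<longleftrightarrow> (0, 1) \<in> snd \<tau>'" "(1, 0) \<in> snd \<tau> \<longleftrightarrow> (1, 0) \<in> snd \<tau>'"
  shows "\<tau> = \<tau>'"
proof -
  have "fst \<tau> i = fst \<tau>' i" for i
    using assms(1-4) by (cases "i < 2") (auto simp: S_def less_2_cases_iff)
  moreover have "snd \<tau> \<subseteq> {..<2} \<times> {..<2}" "snd \<tau>' \<subseteq> {..<2} \<times> {..<2}"
    "(0, 0) \<in> snd \<tau>" "(1, 1) \<in> snd \<tau>" "(0, 0) \<in> snd \<tau>'" "(1, 1) \<in> snd \<tau>'"
    using assms(1,2) by (auto simp: S_def split_order_def refl_on_def)
  then have "(a, b) \<in> snd \<tau> \<longleftrightarrow> (a, b) \<in> snd \<tau>'" for a b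
    using assms(5,6) by (cases "a < 2 \<and> b < 2") (auto simp: less_2_cases_iff)
  ultimately show ?thesis
    by (simp add: prod_eq_iff fun_eq_iff set_eq_iff)
qed

lemma grid_pattern_pair_surj:
  assumes \<tau>: "\<tau> \<in> S l 2" and "2 \<le> m"
  obtains a b where "[a, b] \<in> grid_tuples l m 2" "grid_pattern [a, b] = \<tau>"
proof -
  obtain g r where \<tau>_def: "\<tau> = (g, r)"
    by (cases \<tau>)
  have so: "split_order l {..<2} g r"
    using \<tau> \<tau>_def by (simp add: S_def)
  have colours: "g 0 \<in> {1..l}" "g 1 \<in> {1..l}"
    and comparable: "((0, 1) \<in> r \<or> (1, 0) \<in> r) \<longleftrightarrow> g 0 = g 1"
    and antisym: "\<not> ((0, 1) \<in> r \<and> (1, 0) \<in> r)"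
    using so by (auto simp: split_order_def dest: antisymD)
  define a where "a = (g 0 - 1, if (1, 0) \<in> r then 1 else 0 :: nat)"
  define b where "b = (g 1 - 1, if (1, 0) \<in> r then 0 else 1 :: nat)"
  have ab: "[a, b] \<in> grid_tuples l m 2"
    using colours \<open>2 \<le> m\<close> by (auto simp: a_def b_def grid_tuples_def)
  have "grid_pattern [a, b] = (g, r)"
    using colours comparable antisym
    by (intro S2_eqI[OF grid_pattern_in_S[OF ab] \<tau>[unfolded \<tau>_def]])
       (auto simp: a_def b_def grid_pattern_def)
  then show thesis
    using that ab \<tau>_def by blast
qed

lemma grid_pattern_pair_colours:
  "fst (grid_pattern [a, b]) 0 = fst a + 1" "fst (grid_pattern [a, b]) 1 = fst b + 1"
  by (simp_all add: grid_pattern_def)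

lemma grid_pattern_same_column:
  assumes "fst a = fst b" "fst a' = fst b'" "fst a = fst a'" "snd a < snd b" "snd a' < snd b'"
  shows "grid_pattern [a, b] = grid_pattern [a', b']"
  using assms by (auto simp: grid_pattern_def fun_eq_iff less_Suc_eq)

definition grid_index :: "nat \<Rightarrow> nat \<times> nat \<Rightarrow> nat" where
  "grid_index m q = fst q * m + snd q"

lemma grid_index_less:
  assumes "q \<in> {..<l} \<times> {..<m}"
  shows "grid_index m q < l * m"
proof -
  have "grid_index m q < Suc (fst q) * m"
    using assms by (auto simp: grid_index_def)
  also have "\<dots> \<le> l * m"
    using assms by (intro mult_le_mono1) auto
  finally show ?thesis .
qed

lemma grid_index_less_iff:
  assumes "snd q < m" "snd q' < m"
  shows "grid_index m q < grid_index m q' \<longleftrightarrow> fst q < fst q' \<or> (fst q = fst q' \<and> snd q < snd q')"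
proof -
  have index_less: "grid_index m a < grid_index m b" if "fst a < fst b" "snd a < m" for a b
  proof -
    have "grid_index m a < Suc (fst a) * m"
      using that by (simp add: grid_index_def)
    also have "\<dots> \<le> grid_index m b"
      using that mult_le_mono1[of "Suc (fst a)" "fst b" m] by (simp add: grid_index_def)
    finally show ?thesis .
  qed
  show ?thesis
  proof (cases "fst q" "fst q'" rule: linorder_cases)
    case less
    then show ?thesis using index_less[of q q'] assms by simp
  next
    case equal
    then show ?thesis by (simp add: grid_index_def)
  next
    case greater
    then show ?thesis using index_less[of q' q] assms by simp
  qed
qed

lemma inj_on_grid_index: "inj_on (grid_index m) (UNIV \<times> {..<m})"
proof (rule inj_onI)
  fix q q' assume "q \<in> UNIV \<times> {..<m}" "q' \<in> UNIV \<times> {..<m}" and eq: "grid_index m q = grid_index m q'"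
  then have "\<not> (fst q < fst q' \<or> (fst q = fst q' \<and> snd q < snd q'))"
    "\<not> (fst q' < fst q \<or> (fst q' = fst q \<and> snd q' < snd q))"
    using grid_index_less_iff[of q m q'] grid_index_less_iff[of q' m q] by auto
  then show "q = q'"
    by (metis linorder_neqE_nat prod_eqI)
qed

lemma grid_index_mod: "b < m \<Longrightarrow> grid_index m (a, b) mod m = b"
  by (simp add: grid_index_def)

lemma grid_index_image_below:
  "set \<beta> \<subseteq> {..<l} \<times> {..<m} \<Longrightarrow> grid_index m ` set \<beta> \<subseteq> {..<l * m}"
  using grid_index_less by blast

definition grid_ranks :: "nat \<Rightarrow> (nat \<times> nat) list \<Rightarrow> (nat \<times> nat) list" where
  "grid_ranks m \<beta> = map (\<lambda>q. (fst q, card {q' \<in> set \<beta>. grid_index m q' < grid_index m q})) \<beta>"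

lemma grid_ranks_eq:
  assumes \<beta>: "\<beta> \<in> grid_tuples l m t" and \<gamma>: "\<gamma> \<in> grid_tuples l m t"
    and same: "grid_pattern \<beta> = grid_pattern \<gamma>"
  shows "grid_ranks m \<beta> = grid_ranks m \<gamma>"
proof -
  have len: "length \<beta> = t" "length \<gamma> = t"
    using \<beta> \<gamma> by (auto simp: grid_tuples_def)
  have "\<beta> ! i \<in> {..<l} \<times> {..<m}" "\<gamma> ! i \<in> {..<l} \<times> {..<m}" if "i < t" for i
    using \<beta> \<gamma> that nth_mem[of i \<beta>] nth_mem[of i \<gamma>] len by (auto simp: grid_tuples_def)
  then have snd_less: "snd (\<beta> ! i) < m" "snd (\<gamma> ! i) < m" if "i < t" for i
    using that by (auto simp: mem_Times_iff)
  have fst_eq: "fst (\<beta> ! i) = fst (\<gamma> ! i)" if "i < t" for i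
    using fun_cong[OF arg_cong[OF same, of fst], of i] that len by (simp add: grid_pattern_def)
  have order_eq: "fst (\<beta> ! i) = fst (\<beta> ! j) \<and> snd (\<beta> ! i) \<le> snd (\<beta> ! j) \<longleftrightarrow>
      fst (\<gamma> ! i) = fst (\<gamma> ! j) \<and> snd (\<gamma> ! i) \<le> snd (\<gamma> ! j)" if "i < t" "j < t" for i j
    using arg_cong[OF same, of "\<lambda>\<tau>. (i, j) \<in> snd \<tau>"] that len by (simp add: grid_pattern_def)
  have index_less_eq: "grid_index m (\<beta> ! j) < grid_index m (\<beta> ! i) \<longleftrightarrow>
      grid_index m (\<gamma> ! j) < grid_index m (\<gamma> ! i)" if "i < t" "j < t" for i j
    using grid_index_less_iff[of "\<beta> ! j" m "\<beta> ! i"] grid_index_less_iff[of "\<gamma> ! j" m "\<gamma> ! i"]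
      snd_less[OF that(1)] snd_less[OF that(2)] fst_eq[OF that(1)] fst_eq[OF that(2)] order_eq[OF that(1,2)]
    by (simp add: not_le[symmetric]) argo
  then have "{j. j < t \<and> grid_index m (\<beta> ! j) < grid_index m (\<beta> ! i)} =
      {j. j < t \<and> grid_index m (\<gamma> ! j) < grid_index m (\<gamma> ! i)}" if "i < t" for i
    using that by blast
  then show ?thesis
    using \<beta> \<gamma> unfolding grid_ranks_def grid_tuples_def
    by (intro nth_equalityI) (auto simp: len fst_eq card_set_filter_conv_nth)
qed

text \<open>Padding a grid tuple with points above the grid gives a \<open>D\<close>-set in which the entries of
  the tuple keep their ranks.\<close>

definition grid_support :: "nat \<Rightarrow> nat \<Rightarrow> nat \<Rightarrow> (nat \<times> nat) list \<Rightarrow> nat set" where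
  "grid_support l m D \<beta> = grid_index m ` set \<beta> \<union> {l * m..<l * m + (D - length \<beta>)}"

lemma grid_support_subset:
  assumes "\<beta> \<in> grid_tuples l m t" "t \<le> D"
  shows "grid_support l m D \<beta> \<subseteq> {..<l * m + D}"
proof -
  have "grid_index m ` set \<beta> \<subseteq> {..<l * m}" "length \<beta> = t"
    using assms(1) grid_index_image_below by (auto simp: grid_tuples_def)
  then show ?thesis
    using assms(2) by (auto simp: grid_support_def)
qed

lemma card_grid_support:
  assumes "\<beta> \<in> grid_tuples l m t" "t \<le> D"
  shows "card (grid_support l m D \<beta>) = D"
proof -
  have dist: "distinct \<beta>" and len: "length \<beta> = t" and grid: "set \<beta> \<subseteq> {..<l} \<times> {..<m}"
    using assms(1) by (auto simp: grid_tuples_def)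
  have "inj_on (grid_index m) (set \<beta>)"
    by (rule inj_on_subset[OF inj_on_grid_index]) (use grid in auto)
  then have "card (grid_index m ` set \<beta>) = t"
    using dist len by (simp add: card_image distinct_card)
  moreover have "grid_index m ` set \<beta> \<inter> {l * m..<l * m + (D - length \<beta>)} = {}"
    using grid_index_image_below[OF grid] by auto
  ultimately show ?thesis
    using assms(2) len by (simp add: grid_support_def card_Un_disjoint)
qed

lemma nth_sorted_grid_support:
  assumes mono: "strict_mono_on {..<l * m + D} \<nu>" and \<beta>: "\<beta> \<in> grid_tuples l m t" "t \<le> D"
    and q: "q \<in> set \<beta>"
  shows "sorted_list_of_set (\<nu> ` grid_support l m D \<beta>) ! card {q' \<in> set \<beta>. grid_index m q' < grid_index m q}
    = \<nu> (grid_index m q)"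
proof -
  have grid: "set \<beta> \<subseteq> {..<l} \<times> {..<m}"
    using \<beta> by (simp add: grid_tuples_def)
  then have "grid_index m q < l * m"
    using grid_index_less q by blast
  then have "{b \<in> grid_support l m D \<beta>. b < grid_index m q} =
      grid_index m ` {q' \<in> set \<beta>. grid_index m q' < grid_index m q}"
    by (auto simp: grid_support_def)
  moreover have "inj_on (grid_index m) {q' \<in> set \<beta>. grid_index m q' < grid_index m q}"
    by (rule inj_on_subset[OF inj_on_grid_index]) (use grid in auto)
  ultimately have "card {b \<in> grid_support l m D \<beta>. b < grid_index m q} =
      card {q' \<in> set \<beta>. grid_index m q' < grid_index m q}"
    by (simp add: card_image)
  then show ?thesis
    using sorted_list_of_set_image_nth[OF mono _ grid_support_subset[OF \<beta>], of "grid_index m q"] q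
    by (simp add: grid_support_def)
qed

lemma grid_ranks_in_grid:
  assumes "\<beta> \<in> grid_tuples l m t"
  shows "length (grid_ranks m \<beta>) = t" "set (grid_ranks m \<beta>) \<subseteq> {..<l} \<times> {..<t}"
proof -
  have "card {q' \<in> set \<beta>. grid_index m q' < grid_index m q} < t" if "q \<in> set \<beta>" for q
  proof -
    have "card {q' \<in> set \<beta>. grid_index m q' < grid_index m q} < card (set \<beta>)"
      using that by (intro psubset_card_mono) auto
    then show ?thesis
      using assms by (simp add: grid_tuples_def distinct_card)
  qed
  then show "length (grid_ranks m \<beta>) = t" "set (grid_ranks m \<beta>) \<subseteq> {..<l} \<times> {..<t}"
    using assms by (auto simp: grid_ranks_def grid_tuples_def)
qed

lemma grid_index_strict_mono_comp:
  fixes \<nu> :: "nat \<Rightarrow> 'a::linorder"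
  assumes mono: "strict_mono_on {..<l * m + D} \<nu>"
  shows "inj_on (\<lambda>q. \<nu> (grid_index m q)) ({..<l} \<times> {..<m})"
    "(\<lambda>q. \<nu> (grid_index m q)) ` ({..<l} \<times> {..<m}) \<subseteq> \<nu> ` {..<l * m + D}"
proof -
  have index_in: "grid_index m ` ({..<l} \<times> {..<m}) \<subseteq> {..<l * m + D}"
  proof (rule image_subsetI)
    fix q assume "q \<in> {..<l} \<times> {..<m}"
    then show "grid_index m q \<in> {..<l * m + D}"
      using grid_index_less[of q l m] by simp
  qed
  then show "(\<lambda>q. \<nu> (grid_index m q)) ` ({..<l} \<times> {..<m}) \<subseteq> \<nu> ` {..<l * m + D}"
    by blast
  have "inj_on (grid_index m) ({..<l} \<times> {..<m})"
    by (rule inj_on_subset[OF inj_on_grid_index]) auto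
  moreover have "inj_on \<nu> (grid_index m ` ({..<l} \<times> {..<m}))"
    using strict_mono_on_imp_inj_on[OF mono] index_in by (rule inj_on_subset)
  ultimately show "inj_on (\<lambda>q. \<nu> (grid_index m q)) ({..<l} \<times> {..<m})"
    using comp_inj_on[of "grid_index m" _ \<nu>] by (simp add: comp_def)
qed

definition grid_uniform :: "'p set \<Rightarrow> ('p \<Rightarrow> nat) \<Rightarrow> 'p struc \<Rightarrow> ('p \<Rightarrow> split_pattern set)
    \<Rightarrow> nat \<Rightarrow> nat \<Rightarrow> (nat \<times> nat \<Rightarrow> nat) \<Rightarrow> bool" where
  "grid_uniform L k N Q l m h \<longleftrightarrow>
     (\<forall>P\<in>L. \<forall>\<beta>\<in>grid_tuples l m (k P). map h \<beta> \<in> rels N P \<longleftrightarrow> grid_pattern \<beta> \<in> Q P)"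

lemma grid_uniform_if_pattern_invariant:
  assumes invariant: "\<And>P \<beta> \<gamma>. P \<in> L \<Longrightarrow> \<beta> \<in> grid_tuples l m (k P) \<Longrightarrow> \<gamma> \<in> grid_tuples l m (k P) \<Longrightarrow>
      grid_pattern \<beta> = grid_pattern \<gamma> \<Longrightarrow> map h \<beta> \<in> rels N P \<Longrightarrow> map h \<gamma> \<in> rels N P"
  shows "\<exists>Q\<in>ramsey_patterns l L k. grid_uniform L k N Q l m h"
proof
  define Q where "Q P = (if P \<in> L then grid_pattern ` {\<beta> \<in> grid_tuples l m (k P). map h \<beta> \<in> rels N P} else {})"
    for P
  show "Q \<in> ramsey_patterns l L k"
    using grid_pattern_in_S by (auto simp: ramsey_patterns_def Q_def)
  show "grid_uniform L k N Q l m h"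
    unfolding grid_uniform_def
  proof (intro ballI iffI)
    fix P \<beta> assume "P \<in> L" "\<beta> \<in> grid_tuples l m (k P)" "map h \<beta> \<in> rels N P"
    then show "grid_pattern \<beta> \<in> Q P"
      by (auto simp: Q_def)
  next
    fix P \<beta> assume P: "P \<in> L" and \<beta>: "\<beta> \<in> grid_tuples l m (k P)" and "grid_pattern \<beta> \<in> Q P"
    then obtain \<gamma> where "\<gamma> \<in> grid_tuples l m (k P)" "map h \<gamma> \<in> rels N P" "grid_pattern \<gamma> = grid_pattern \<beta>"
      by (auto simp: Q_def)
    then show "map h \<beta> \<in> rels N P"
      using invariant[OF P _ \<beta>] by blast
  qed
qed

text \<open>A \<open>D\<close>-subset of \<open>{..<R}\<close> is coloured by the relations of \<open>N\<close> among the tuples it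
  carries, a tuple being addressed by the columns and ranks of its entries; a homogeneous set
  of size \<open>l * m + D\<close> contains the grid, and the relations on a grid tuple can be read off
  from the colour of its padded support, which is the same for all tuples of one pattern.\<close>

lemma ramsey_grid:
  assumes "lang_ok L k"
  shows "\<exists>R. \<forall>(N :: 'p struc) (e :: nat \<Rightarrow> nat \<Rightarrow> nat). \<exists>Q\<in>ramsey_patterns l L k. \<exists>\<sigma>.
           \<sigma> ` ({..<l} \<times> {..<m}) \<subseteq> {..<R} \<and> inj_on \<sigma> ({..<l} \<times> {..<m}) \<and>
           grid_uniform L k N Q l m (\<lambda>q. e (fst q) (\<sigma> q))"
proof -
  define D where "D = Max (insert 0 (k ` L))"
  have finite_L: "finite L"
    using assms by (simp add: lang_ok_def)
  have arity_le: "k P \<le> D" if "P \<in> L" for P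
    using finite_L that by (simp add: D_def)
  define Types where "Types = L \<times> {p. set p \<subseteq> {..<l} \<times> {..<D} \<and> length p \<le> D}"
  have "finite (Pow Types)"
    using finite_L by (simp add: Types_def finite_lists_length_le)
  then obtain R :: nat where R: "\<forall>col. (\<forall>S. col S \<in> Pow Types) \<longrightarrow> (\<exists>\<nu>.
      strict_mono_on {..<l * m + D} \<nu> \<and> \<nu> ` {..<l * m + D} \<subseteq> {..<R} \<and>
      (\<forall>A\<subseteq>{..<l * m + D}. \<forall>B\<subseteq>{..<l * m + D}. card A = D \<longrightarrow> card B = D \<longrightarrow>
         col (\<nu> ` A) = col (\<nu> ` B)))"
    by (elim exE[OF ramsey_homogeneous_enumeration])
  show ?thesis
  proof (intro exI[of _ R] allI)
    fix N :: "'p struc" and e :: "nat \<Rightarrow> nat \<Rightarrow> nat"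
    define col where "col S = {(P, p) \<in> Types. length p = k P \<and>
        map (\<lambda>(c, i). e c (sorted_list_of_set S ! i)) p \<in> rels N P}" for S
    have "\<forall>S. col S \<in> Pow Types"
      unfolding col_def by blast
    with R[THEN spec[where x = col]] obtain \<nu> where \<nu>_mono: "strict_mono_on {..<l * m + D} \<nu>"
      and \<nu>_R: "\<nu> ` {..<l * m + D} \<subseteq> {..<R}"
      and hom: "\<forall>A\<subseteq>{..<l * m + D}. \<forall>B\<subseteq>{..<l * m + D}. card A = D \<longrightarrow> card B = D \<longrightarrow>
         col (\<nu> ` A) = col (\<nu> ` B)"
      by blast
    define \<sigma> where "\<sigma> q = \<nu> (grid_index m q)" for q
    have \<sigma>_inj: "inj_on \<sigma> ({..<l} \<times> {..<m})"
      unfolding \<sigma>_def by (rule grid_index_strict_mono_comp[OF \<nu>_mono])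
    have \<sigma>_R: "\<sigma> ` ({..<l} \<times> {..<m}) \<subseteq> {..<R}"
      using grid_index_strict_mono_comp(2)[OF \<nu>_mono] \<nu>_R unfolding \<sigma>_def by blast
    have rels_iff_col: "map (\<lambda>q. e (fst q) (\<sigma> q)) \<beta> \<in> rels N P \<longleftrightarrow>
        (P, grid_ranks m \<beta>) \<in> col (\<nu> ` grid_support l m D \<beta>)"
      if P: "P \<in> L" and \<beta>: "\<beta> \<in> grid_tuples l m (k P)" for P \<beta>
    proof -
      have "map (\<lambda>(c, i). e c (sorted_list_of_set (\<nu> ` grid_support l m D \<beta>) ! i)) (grid_ranks m \<beta>) =
          map (\<lambda>q. e (fst q) (\<sigma> q)) \<beta>"
        using nth_sorted_grid_support[OF \<nu>_mono \<beta> arity_le[OF P]] by (simp add: grid_ranks_def \<sigma>_def)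
      moreover have "(P, grid_ranks m \<beta>) \<in> Types"
        using grid_ranks_in_grid[OF \<beta>] P arity_le[OF P] by (auto simp: Types_def)
      ultimately show ?thesis
        using grid_ranks_in_grid(1)[OF \<beta>] by (simp add: col_def)
    qed
    have "\<exists>Q\<in>ramsey_patterns l L k. grid_uniform L k N Q l m (\<lambda>q. e (fst q) (\<sigma> q))"
    proof (rule grid_uniform_if_pattern_invariant)
      fix P \<beta> \<gamma> assume P: "P \<in> L" and \<beta>: "\<beta> \<in> grid_tuples l m (k P)" and \<gamma>: "\<gamma> \<in> grid_tuples l m (k P)"
        and "grid_pattern \<beta> = grid_pattern \<gamma>" "map (\<lambda>q. e (fst q) (\<sigma> q)) \<beta> \<in> rels N P"
      moreover have "col (\<nu> ` grid_support l m D \<beta>) = col (\<nu> ` grid_support l m D \<gamma>)"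
        using hom[rule_format, OF grid_support_subset[OF \<beta> arity_le[OF P]] grid_support_subset[OF \<gamma> arity_le[OF P]]]
          card_grid_support[OF \<beta> arity_le[OF P]] card_grid_support[OF \<gamma> arity_le[OF P]] by blast
      ultimately show "map (\<lambda>q. e (fst q) (\<sigma> q)) \<gamma> \<in> rels N P"
        using rels_iff_col[OF P] grid_ranks_eq[OF \<beta> \<gamma>] by simp
    qed
    then show "\<exists>Q\<in>ramsey_patterns l L k. \<exists>\<sigma>. \<sigma> ` ({..<l} \<times> {..<m}) \<subseteq> {..<R} \<and>
        inj_on \<sigma> ({..<l} \<times> {..<m}) \<and> grid_uniform L k N Q l m (\<lambda>q. e (fst q) (\<sigma> q))"
      using \<sigma>_R \<sigma>_inj by blast
  qed
qed

lemma iso_sym: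
  assumes "iso M N"
  shows "iso N M"
proof -
  obtain h where h: "bij_betw h (verts M) (verts N)"
    and h_rels: "\<And>P \<alpha>. set \<alpha> \<subseteq> verts M \<Longrightarrow> map h \<alpha> \<in> rels N P \<longleftrightarrow> \<alpha> \<in> rels M P"
    using assms by (auto simp: iso_def)
  define h' where "h' = inv_into (verts M) h"
  have h': "bij_betw h' (verts N) (verts M)"
    using h by (simp add: h'_def bij_betw_inv_into)
  have "map h' \<alpha> \<in> rels M P \<longleftrightarrow> \<alpha> \<in> rels N P" if "set \<alpha> \<subseteq> verts N" for P \<alpha>
  proof -
    have "set (map h' \<alpha>) \<subseteq> verts M"
      using h' that by (auto simp: bij_betw_def)
    moreover have "map h (map h' \<alpha>) = \<alpha>"
      unfolding map_map comp_def
      by (rule map_idI) (use that h in \<open>auto simp: h'_def bij_betw_def f_inv_into_f\<close>)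
    ultimately show ?thesis
      using h_rels by metis
  qed
  then show ?thesis
    using h' by (auto simp: iso_def)
qed

lemma split_order_cong:
  "split_order l V f r \<Longrightarrow> (\<And>v. v \<in> V \<Longrightarrow> f v = g v) \<Longrightarrow> split_order l V g r"
  by (simp add: split_order_def)

lemma split_order_pullback:
  assumes so: "split_order l V f r" and h: "inj_on h W" "h ` W \<subseteq> V"
  shows "split_order l W (f \<circ> h) {(a, b). a \<in> W \<and> b \<in> W \<and> (h a, h b) \<in> r}"
  unfolding split_order_def
proof (intro conjI)
  have props: "\<forall>v\<in>V. f v \<in> {1..l}" "refl_on V r" "antisym r" "trans r"
    "\<forall>v\<in>V. \<forall>w\<in>V. ((v, w) \<in> r \<or> (w, v) \<in> r) \<longleftrightarrow> f v = f w"
    using so by (simp_all add: split_order_def)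
  show "\<forall>v\<in>W. (f \<circ> h) v \<in> {1..l}"
    using props(1) h(2) by auto
  show "{(a, b). a \<in> W \<and> b \<in> W \<and> (h a, h b) \<in> r} \<subseteq> W \<times> W"
    by auto
  show "refl_on W {(a, b). a \<in> W \<and> b \<in> W \<and> (h a, h b) \<in> r}"
    using props(2) h(2) by (auto simp: refl_on_def)
  show "antisym {(a, b). a \<in> W \<and> b \<in> W \<and> (h a, h b) \<in> r}"
    using props(3) h(1) by (auto simp: antisym_def inj_on_def)
  show "trans {(a, b). a \<in> W \<and> b \<in> W \<and> (h a, h b) \<in> r}"
    using props(4) by (auto simp: trans_def)
  show "\<forall>v\<in>W. \<forall>w\<in>W. ((v, w) \<in> {(a, b). a \<in> W \<and> b \<in> W \<and> (h a, h b) \<in> r} \<or>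
      (w, v) \<in> {(a, b). a \<in> W \<and> b \<in> W \<and> (h a, h b) \<in> r}) \<longleftrightarrow> (f \<circ> h) v = (f \<circ> h) w"
    using props(5) h(2) by auto
qed

lemma pull_pullback:
  assumes "set \<beta> \<subseteq> W"
  shows "pull (f \<circ> h) {(a, b). a \<in> W \<and> b \<in> W \<and> (h a, h b) \<in> r} \<beta> = pull f r (map h \<beta>)"
  using assms by (auto simp: pull_def)

lemma pull_in_S:
  assumes so: "split_order l V f r" and \<alpha>: "\<alpha> \<in> inj_tuples V t"
  shows "pull f r \<alpha> \<in> S l t"
proof -
  have dist: "distinct \<alpha>" and len: "length \<alpha> = t" and set_\<alpha>: "set \<alpha> \<subseteq> V"
    using \<alpha> by (auto simp: inj_tuples_def)
  have "inj_on ((!) \<alpha>) {..<t}" "(!) \<alpha> ` {..<t} \<subseteq> V"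
    using dist len set_\<alpha> by (auto simp: inj_on_def nth_eq_iff_index_eq)
  from split_order_pullback[OF so this]
  have "split_order l {..<t} (fst (pull f r \<alpha>)) {(a, b). a \<in> {..<t} \<and> b \<in> {..<t} \<and> (\<alpha> ! a, \<alpha> ! b) \<in> r}"
    by (rule split_order_cong) (auto simp: pull_def len)
  moreover have "snd (pull f r \<alpha>) = {(a, b). a \<in> {..<t} \<and> b \<in> {..<t} \<and> (\<alpha> ! a, \<alpha> ! b) \<in> r}"
    by (auto simp: pull_def len)
  ultimately have "split_order l {..<t} (fst (pull f r \<alpha>)) (snd (pull f r \<alpha>))"
    by simp
  then show ?thesis
    using len by (auto simp: S_def pull_def)
qed

lemma pattern_in_U_of_iso_induced:
  assumes Q: "Q \<in> ramsey_patterns l L k" and G: "canonical L k G"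
    and so: "split_order l (verts N) f r" and uni: "uniform L k N Q f r"
    and Us: "Us \<subseteq> verts N" and iso: "iso G (induced N Us)"
  shows "Q \<in> U l L k G"
proof -
  obtain h where h: "bij_betw h (verts G) Us"
    and h_rels: "\<And>P \<alpha>. set \<alpha> \<subseteq> verts G \<Longrightarrow> map h \<alpha> \<in> rels (induced N Us) P \<longleftrightarrow> \<alpha> \<in> rels G P"
    using iso by (auto simp: iso_def induced_def)
  have h_inj: "inj_on h (verts G)" and h_V: "h ` verts G \<subseteq> verts N"
    using h Us by (auto simp: bij_betw_def)
  define r' where "r' = {(a, b). a \<in> verts G \<and> b \<in> verts G \<and> (h a, h b) \<in> r}"
  have "rels G P = {\<alpha> \<in> inj_tuples (verts G) (k P). pull (f \<circ> h) r' \<alpha> \<in> Q P}" if P: "P \<in> L" for P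
  proof (intro equalityI subsetI)
    fix \<alpha> assume \<alpha>: "\<alpha> \<in> rels G P"
    then have \<alpha>_tuple: "\<alpha> \<in> inj_tuples (verts G) (k P)"
      using G P by (auto simp: canonical_def)
    then have "map h \<alpha> \<in> rels N P"
      using h_rels[of \<alpha> P] \<alpha> by (auto simp: inj_tuples_def induced_def)
    then have "pull f r (map h \<alpha>) \<in> Q P"
      using uni P by (auto simp: uniform_def)
    then show "\<alpha> \<in> {\<alpha> \<in> inj_tuples (verts G) (k P). pull (f \<circ> h) r' \<alpha> \<in> Q P}"
      using \<alpha>_tuple pull_pullback[of \<alpha> "verts G" f h r] by (simp add: r'_def inj_tuples_def)
  next
    fix \<alpha> assume "\<alpha> \<in> {\<alpha> \<in> inj_tuples (verts G) (k P). pull (f \<circ> h) r' \<alpha> \<in> Q P}"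
    then have \<alpha>_tuple: "\<alpha> \<in> inj_tuples (verts G) (k P)" and "pull f r (map h \<alpha>) \<in> Q P"
      using pull_pullback[of \<alpha> "verts G" f h r] by (auto simp: r'_def inj_tuples_def)
    moreover have "map h \<alpha> \<in> inj_tuples (verts N) (k P)"
      using \<alpha>_tuple h_inj h_V by (auto simp: inj_tuples_def distinct_map inj_on_subset)
    ultimately have "map h \<alpha> \<in> rels N P"
      using uni P by (auto simp: uniform_def)
    moreover have "set (map h \<alpha>) \<subseteq> Us"
      using \<alpha>_tuple h by (auto simp: inj_tuples_def bij_betw_def)
    ultimately show "\<alpha> \<in> rels G P"
      using h_rels[of \<alpha> P] \<alpha>_tuple by (auto simp: inj_tuples_def induced_def)
  qed
  then have "uniform L k G Q (f \<circ> h) r'"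
    by (simp add: uniform_def)
  moreover have "split_order l (verts G) (f \<circ> h) r'"
    unfolding r'_def using so h_inj h_V by (rule split_order_pullback)
  ultimately show ?thesis
    using Q by (auto simp: U_def)
qed

lemma uniform_in_Forb:
  assumes "Q \<in> ramsey_patterns l L k" "Q \<notin> U_fam l L k F" "\<forall>G\<in>F. canonical L k G"
    and "canonical L k N" "split_order l (verts N) f r" "uniform L k N Q f r"
  shows "N \<in> Forb L k F"
  using assms pattern_in_U_of_iso_induced[OF assms(1) _ assms(5,6) _ iso_sym]
  by (auto simp: Forb_def U_fam_def)

definition split_rank :: "nat set \<Rightarrow> (nat \<times> nat) set \<Rightarrow> nat \<Rightarrow> nat" where
  "split_rank V r v = card {w \<in> V. (w, v) \<in> r \<and> w \<noteq> v}"

lemma split_rank_le_iff: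
  assumes so: "split_order l V f r" and fin: "finite V" and vw: "v \<in> V" "w \<in> V" "f v = f w"
  shows "(v, w) \<in> r \<longleftrightarrow> split_rank V r v \<le> split_rank V r w"
proof -
  have below_mono: "{u \<in> V. (u, v') \<in> r \<and> u \<noteq> v'} \<subseteq> {u \<in> V. (u, w') \<in> r \<and> u \<noteq> w'}"
    if "(v', w') \<in> r" for v' w'
    using so that by (auto simp: split_order_def dest: transD antisymD)
  show ?thesis
  proof
    assume "(v, w) \<in> r"
    then show "split_rank V r v \<le> split_rank V r w"
      unfolding split_rank_def using fin below_mono by (intro card_mono) auto
  next
    assume le: "split_rank V r v \<le> split_rank V r w"
    show "(v, w) \<in> r"
    proof (rule ccontr)
      assume not_vw: "(v, w) \<notin> r"
      then have "(w, v) \<in> r" "v \<noteq> w"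
        using so vw by (auto simp: split_order_def refl_on_def)
      then have "{u \<in> V. (u, w) \<in> r \<and> u \<noteq> w} \<subset> {u \<in> V. (u, v) \<in> r \<and> u \<noteq> v}"
        using below_mono vw(2) by blast
      then have "split_rank V r w < split_rank V r v"
        unfolding split_rank_def using fin by (intro psubset_card_mono) auto
      then show False
        using le by simp
    qed
  qed
qed

lemma split_rank_less_card: "finite V \<Longrightarrow> v \<in> V \<Longrightarrow> split_rank V r v < card V"
  unfolding split_rank_def by (rule psubset_card_mono) auto

text \<open>Placing each part of a split order in its own column, ordered by rank, turns patterns
  of tuples into grid patterns.\<close>

lemma split_order_grid_coordinates:
  assumes so: "split_order l V f r" and fin: "finite V" and card: "card V \<le> m"
  obtains j where "inj_on j V" "j ` V \<subseteq> {..<l} \<times> {..<m}"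
    "\<And>\<alpha>. set \<alpha> \<subseteq> V \<Longrightarrow> pull f r \<alpha> = grid_pattern (map j \<alpha>)"
proof
  define j where "j v = (f v - 1, split_rank V r v)" for v
  have colour: "f v \<in> {1..l}" if "v \<in> V" for v
    using so that by (simp add: split_order_def)
  have comparable: "((v, w) \<in> r \<or> (w, v) \<in> r) \<longleftrightarrow> f v = f w" if "v \<in> V" "w \<in> V" for v w
    using so that by (simp add: split_order_def)
  have order_iff: "(v, w) \<in> r \<longleftrightarrow> fst (j v) = fst (j w) \<and> snd (j v) \<le> snd (j w)"
    if "v \<in> V" "w \<in> V" for v w
    using split_rank_le_iff[OF so fin that] comparable[OF that] colour[OF that(1)] colour[OF that(2)]
    by (auto simp: j_def)
  show "inj_on j V"
  proof (rule inj_onI)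
    fix v w assume "v \<in> V" "w \<in> V" "j v = j w"
    then show "v = w"
      using order_iff[of v w] order_iff[of w v] so by (auto simp: split_order_def dest: antisymD)
  qed
  show "j ` V \<subseteq> {..<l} \<times> {..<m}"
  proof
    fix x assume "x \<in> j ` V"
    then obtain v where "v \<in> V" "x = j v"
      by blast
    then show "x \<in> {..<l} \<times> {..<m}"
      using colour[of v] split_rank_less_card[OF fin, of v r] card by (auto simp: j_def)
  qed
  fix \<alpha> assume \<alpha>: "set \<alpha> \<subseteq> V"
  then have "f (\<alpha> ! i) = fst (j (\<alpha> ! i)) + 1" if "i < length \<alpha>" for i
    using colour[of "\<alpha> ! i"] nth_mem[OF that] by (auto simp: j_def)
  moreover have "(\<alpha> ! i, \<alpha> ! i') \<in> r \<longleftrightarrow> fst (j (\<alpha> ! i)) = fst (j (\<alpha> ! i')) \<and> snd (j (\<alpha> ! i)) \<le> snd (j (\<alpha> ! i'))"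
    if "i < length \<alpha>" "i' < length \<alpha>" for i i'
    using order_iff \<alpha> that by (simp add: subset_iff)
  ultimately show "pull f r \<alpha> = grid_pattern (map j \<alpha>)"
    by (auto simp: pull_def grid_pattern_def)
qed

lemma grid_uniform_embeds:
  assumes N: "canonical L k N" and M: "canonical L k M"
    and so: "split_order l (verts M) f r" and uni: "uniform L k M Q f r" and card: "card (verts M) \<le> m"
    and h_inj: "inj_on h ({..<l} \<times> {..<m})" and h_V: "h ` ({..<l} \<times> {..<m}) \<subseteq> verts N"
    and gu: "grid_uniform L k N Q l m h"
  shows "\<exists>U \<subseteq> verts N. iso (induced N U) M"
proof -
  have fin: "finite (verts M)"
    using M by (simp add: canonical_def)
  obtain j where j_inj: "inj_on j (verts M)" and j_grid: "j ` verts M \<subseteq> {..<l} \<times> {..<m}"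
    and j_pull: "\<And>\<alpha>. set \<alpha> \<subseteq> verts M \<Longrightarrow> pull f r \<alpha> = grid_pattern (map j \<alpha>)"
    using split_order_grid_coordinates[OF so fin card] by blast
  define g where "g = h \<circ> j"
  have g_inj: "inj_on g (verts M)"
    unfolding g_def using j_inj inj_on_subset[OF h_inj j_grid] by (rule comp_inj_on)
  have "map g \<alpha> \<in> rels N P \<longleftrightarrow> \<alpha> \<in> rels M P" if \<alpha>: "set \<alpha> \<subseteq> verts M" for P \<alpha>
  proof (cases "P \<in> L \<and> distinct \<alpha> \<and> length \<alpha> = k P")
    case True
    then have "map j \<alpha> \<in> grid_tuples l m (k P)"
      using \<alpha> j_grid inj_on_subset[OF j_inj \<alpha>] by (auto simp: grid_tuples_def distinct_map)
    then have "map h (map j \<alpha>) \<in> rels N P \<longleftrightarrow> grid_pattern (map j \<alpha>) \<in> Q P"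
      using gu True unfolding grid_uniform_def by blast
    then have "map g \<alpha> \<in> rels N P \<longleftrightarrow> pull f r \<alpha> \<in> Q P"
      using j_pull[OF \<alpha>] by (simp add: g_def)
    also have "\<dots> \<longleftrightarrow> \<alpha> \<in> rels M P"
      using uni True \<alpha> by (auto simp: uniform_def inj_tuples_def)
    finally show ?thesis .
  next
    case False
    then have "map g \<alpha> \<notin> inj_tuples (verts N) (k P) \<or> P \<notin> L" "\<alpha> \<notin> inj_tuples (verts M) (k P) \<or> P \<notin> L"
      using inj_on_subset[OF g_inj \<alpha>] by (auto simp: inj_tuples_def distinct_map)
    then show ?thesis
      using N M by (auto simp: canonical_def)
  qed
  then have "iso M (induced N (g ` verts M))"
    unfolding iso_def using g_inj by (intro exI[of _ g]) (auto simp: induced_def bij_betw_def)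
  moreover have "g ` verts M \<subseteq> verts N"
    using h_V j_grid by (auto simp: g_def)
  ultimately show ?thesis
    using iso_sym by blast
qed

lemma finite_S: "finite (S l t)"
proof -
  define G where "G = {g :: nat \<Rightarrow> nat. \<forall>i. (i < t \<longrightarrow> g i \<le> l) \<and> (t \<le> i \<longrightarrow> g i = 0)}"
  have "G \<subseteq> (\<lambda>xs i. if i < t then xs ! i else 0) ` {xs. set xs \<subseteq> {..l} \<and> length xs = t}"
  proof
    fix g assume g: "g \<in> G"
    then have "g = (\<lambda>i. if i < t then map g [0..<t] ! i else 0)"
      by (auto simp: G_def)
    moreover have "map g [0..<t] \<in> {xs. set xs \<subseteq> {..l} \<and> length xs = t}"
      using g by (auto simp: G_def)
    ultimately show "g \<in> (\<lambda>xs i. if i < t then xs ! i else 0) ` {xs. set xs \<subseteq> {..l} \<and> length xs = t}"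
      by blast
  qed
  then have "finite G"
    by (rule finite_subset) (intro finite_imageI finite_lists_length_eq; simp)
  moreover have "S l t \<subseteq> G \<times> Pow ({..<t} \<times> {..<t})"
    by (auto simp: S_def split_order_def G_def)
  ultimately show ?thesis
    by (meson finite_Pow_iff finite_SigmaI finite_cartesian_product finite_lessThan finite_subset)
qed

lemma finite_ramsey_patterns:
  assumes "finite L"
  shows "finite (ramsey_patterns l L k)"
proof -
  define SS where "SS = (\<Union>P\<in>L. S l (k P))"
  have "finite SS"
    using assms finite_S by (simp add: SS_def)
  have "ramsey_patterns l L k \<subseteq> (\<lambda>g P. if P \<in> L then g P else {}) ` PiE L (\<lambda>_. Pow SS)"
  proof
    fix Q assume Q: "Q \<in> ramsey_patterns l L k"
    then have "Q = (\<lambda>P. if P \<in> L then restrict Q L P else {})"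
      by (intro ext) (auto simp: ramsey_patterns_def)
    moreover have "restrict Q L \<in> PiE L (\<lambda>_. Pow SS)"
      using Q by (auto simp: ramsey_patterns_def SS_def)
    ultimately show "Q \<in> (\<lambda>g P. if P \<in> L then g P else {}) ` PiE L (\<lambda>_. Pow SS)"
      by blast
  qed
  moreover have "finite (PiE L (\<lambda>_. Pow SS))"
    using assms \<open>finite SS\<close> by (simp add: finite_PiE)
  ultimately show ?thesis
    by (meson finite_imageI finite_subset)
qed

lemma U_fam_witness_bound:
  assumes "finite PS"
  shows "\<exists>m. \<forall>Q\<in>PS. Q \<in> U_fam l L k F \<longrightarrow>
     (\<exists>M\<in>F. \<exists>f r. split_order l (verts M) f r \<and> uniform L k M Q f r \<and> card (verts M) \<le> m)"
proof -
  define W where "W Q = (SOME M. M \<in> F \<and> Q \<in> U l L k M)" for Q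
  have "\<exists>M\<in>F. \<exists>f r. split_order l (verts M) f r \<and> uniform L k M Q f r \<and>
      card (verts M) \<le> (\<Sum>Q\<in>PS. card (verts (W Q)))" if Q: "Q \<in> PS" "Q \<in> U_fam l L k F" for Q
  proof -
    have "W Q \<in> F \<and> Q \<in> U l L k (W Q)"
      unfolding W_def by (rule someI_ex) (use Q in \<open>auto simp: U_fam_def\<close>)
    moreover have "card (verts (W Q)) \<le> (\<Sum>Q\<in>PS. card (verts (W Q)))"
      by (rule member_le_sum[OF Q(1) _ assms]) simp
    ultimately show ?thesis
      by (auto simp: U_def)
  qed
  then show ?thesis
    by blast
qed

text \<open>The split order on \<open>{..<n}\<close> whose parts are the residue classes modulo \<open>l\<close>; the
  pairs of vertices in different parts are exactly the edges of the Tur\'an graph \<open>T\<^sub>n\<^sub>,\<^sub>l\<close>.\<close>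

definition mod_colour :: "nat \<Rightarrow> nat \<Rightarrow> nat" where
  "mod_colour l i = i mod l + 1"

definition mod_order :: "nat \<Rightarrow> nat \<Rightarrow> (nat \<times> nat) set" where
  "mod_order l n = {(i, j). i < n \<and> j < n \<and> i mod l = j mod l \<and> i \<le> j}"

definition uniform_struc :: "'p set \<Rightarrow> ('p \<Rightarrow> nat) \<Rightarrow> nat \<Rightarrow> nat \<Rightarrow> ('p \<Rightarrow> split_pattern set) \<Rightarrow> 'p struc" where
  "uniform_struc L k l n Q = \<lparr>verts = {..<n}, rels = (\<lambda>P. if P \<in> L then
      {\<alpha> \<in> inj_tuples {..<n} (k P). pull (mod_colour l) (mod_order l n) \<alpha> \<in> Q P} else {})\<rparr>"

lemma split_order_mod: "l \<ge> 1 \<Longrightarrow> split_order l {..<n} (mod_colour l) (mod_order l n)"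
  by (auto simp: split_order_def mod_colour_def mod_order_def refl_on_def antisym_def trans_def Suc_le_eq)

lemma verts_uniform_struc [simp]: "verts (uniform_struc L k l n Q) = {..<n}"
  by (simp add: uniform_struc_def)

lemma canonical_uniform_struc: "canonical L k (uniform_struc L k l n Q)"
  by (auto simp: canonical_def uniform_struc_def)

lemma uniform_uniform_struc: "uniform L k (uniform_struc L k l n Q) Q (mod_colour l) (mod_order l n)"
  by (simp add: uniform_def uniform_struc_def)

lemma pair_in_uniform_struc:
  assumes "P \<in> L" "k P = 2" "i < n" "j < n" "i \<noteq> j"
  shows "[i, j] \<in> rels (uniform_struc L k l n Q) P \<longleftrightarrow> pull (mod_colour l) (mod_order l n) [i, j] \<in> Q P"
  using assms by (simp add: uniform_struc_def inj_tuples_def)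

definition turan_embeds :: "'p struc set \<Rightarrow> 'p qf \<Rightarrow> nat \<Rightarrow> bool" where
  "turan_embeds Mod \<phi> l \<longleftrightarrow> (\<forall>n. \<exists>N\<in>Mod. card (verts N) = n \<and> turan_sub n l \<phi> N)"

lemma chi_eq_infinity:
  assumes "\<And>l. l \<ge> 1 \<Longrightarrow> turan_embeds Mod \<phi> l"
  shows "chi Mod \<phi> = \<infinity>"
proof -
  have "{l. l \<ge> 1 \<and> turan_embeds Mod \<phi> l} = {1..}"
    using assms by auto
  moreover have "inj enat"
    by (simp add: inj_on_def)
  ultimately have "infinite (enat ` {l. l \<ge> 1 \<and> turan_embeds Mod \<phi> l} \<union> {0})"
    using infinite_Ici by (auto simp: finite_image_iff inj_on_subset)
  then show ?thesis
    by (simp add: chi_def turan_embeds_def[symmetric] Sup_enat_def)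
qed

lemma chi_eq_enat:
  assumes "l0 \<ge> 1" and embeds_iff: "\<And>l. l \<ge> 1 \<Longrightarrow> turan_embeds Mod \<phi> l \<longleftrightarrow> l < l0"
  shows "chi Mod \<phi> = enat l0"
proof -
  have "enat ` {l. l \<ge> 1 \<and> turan_embeds Mod \<phi> l} \<union> {0} = enat ` {..<l0}"
    using embeds_iff \<open>l0 \<ge> 1\<close> by (auto simp: zero_enat_def image_iff Suc_le_eq)
  moreover have "Max (enat ` {..<l0}) = enat (l0 - 1)"
    using \<open>l0 \<ge> 1\<close> by (intro Max_eqI) auto
  moreover have "{..<l0} \<noteq> {}"
    using \<open>l0 \<ge> 1\<close> by (auto simp: lessThan_empty_iff)
  ultimately have "chi Mod \<phi> = enat (l0 - 1) + 1"
    by (simp add: chi_def turan_embeds_def[symmetric] Sup_enat_def)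
  then show ?thesis
    using \<open>l0 \<ge> 1\<close> by (simp add: one_enat_def)
qed

text \<open>Column \<open>c\<close> of the grid goes to the residue class \<open>c\<close> of \<open>{..<R * l'}\<close>, so points in
  different columns become adjacent in the Turan graph \<open>T\<^sub>R\<^sub>l\<^sub>',\<^sub>l\<^sub>'\<close>.\<close>

lemma turan_grid_index:
  assumes \<sigma>: "\<sigma> ` ({..<l} \<times> {..<m}) \<subseteq> {..<R}" "inj_on \<sigma> ({..<l} \<times> {..<m})" and "l \<le> l'"
  defines "\<iota> \<equiv> \<lambda>q. grid_index l' (\<sigma> q, fst q)"
  shows "inj_on \<iota> ({..<l} \<times> {..<m})" "\<iota> ` ({..<l} \<times> {..<m}) \<subseteq> {..<R * l'}"
    "\<And>a b. a \<in> {..<l} \<times> {..<m} \<Longrightarrow> b \<in> {..<l} \<times> {..<m} \<Longrightarrow> fst a \<noteq> fst b \<Longrightarrow>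
      turan_edge (R * l') l' (\<iota> a) (\<iota> b)"
proof -
  have \<iota>_grid: "(\<sigma> q, fst q) \<in> {..<R} \<times> {..<l'}" if "q \<in> {..<l} \<times> {..<m}" for q
    using that \<sigma>(1) \<open>l \<le> l'\<close> by auto
  have \<iota>_less: "\<iota> q < R * l'" if "q \<in> {..<l} \<times> {..<m}" for q
    unfolding \<iota>_def using grid_index_less[OF \<iota>_grid[OF that]] .
  then show "\<iota> ` ({..<l} \<times> {..<m}) \<subseteq> {..<R * l'}"
    by blast
  show "inj_on \<iota> ({..<l} \<times> {..<m})"
  proof (rule inj_onI)
    fix q q' assume q: "q \<in> {..<l} \<times> {..<m}" "q' \<in> {..<l} \<times> {..<m}" "\<iota> q = \<iota> q'"
    have "(\<sigma> q, fst q) \<in> UNIV \<times> {..<l'}" "(\<sigma> q', fst q') \<in> UNIV \<times> {..<l'}"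
      using \<iota>_grid[OF q(1)] \<iota>_grid[OF q(2)] by auto
    then have "(\<sigma> q, fst q) = (\<sigma> q', fst q')"
      using inj_onD[OF inj_on_grid_index q(3)[unfolded \<iota>_def]] by blast
    then show "q = q'"
      using inj_onD[OF \<sigma>(2) _ q(1,2)] by simp
  qed
  fix a b assume "a \<in> {..<l} \<times> {..<m}" "b \<in> {..<l} \<times> {..<m}" "fst a \<noteq> fst b"
  then show "turan_edge (R * l') l' (\<iota> a) (\<iota> b)"
    using \<iota>_less \<iota>_grid grid_index_mod by (simp add: turan_edge_def \<iota>_def)
qed

section \<open>Theories with a symmetric edge relation\<close>

locale forb_edge_theory =
  fixes L :: "'q set" and k :: "'q \<Rightarrow> nat" and E :: 'q and F :: "'q struc set" and Mod :: "'q struc set"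
  assumes lang_ok: "lang_ok L k" and E_in_L: "E \<in> L" and arity_E: "k E = 2"
    and E_sym: "\<forall>N\<in>Mod. \<forall>x y. [x, y] \<in> rels N E \<longrightarrow> [y, x] \<in> rels N E"
    and F_canonical: "\<forall>G\<in>F. canonical L k G" and Mod_eq: "Mod = Forb L k F"
begin

definition E_clique :: "'q struc \<Rightarrow> nat set \<Rightarrow> bool" where
  "E_clique N A \<longleftrightarrow> A \<subseteq> verts N \<and> (\<forall>x\<in>A. \<forall>y\<in>A. x \<noteq> y \<longrightarrow> [x, y] \<in> rels N E)"

lemma grid_uniform_E_iff:
  "grid_uniform L k N Q l m h \<Longrightarrow> \<beta> \<in> grid_tuples l m 2 \<Longrightarrow> map h \<beta> \<in> rels N E \<longleftrightarrow> grid_pattern \<beta> \<in> Q E"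
  using E_in_L arity_E by (auto simp: grid_uniform_def)

lemma pattern_E_subset:
  assumes "Q \<in> ramsey_patterns l L k"
  shows "Q E \<subseteq> S l 2"
proof -
  have "Q E \<subseteq> S l (k E)"
    using assms E_in_L by (simp add: ramsey_patterns_def)
  then show ?thesis
    using arity_E by simp
qed

text \<open>A uniform grid contains a copy of every small enough witness of its pattern.\<close>

lemma large_grid_pattern_not_in_U_fam:
  "\<exists>m0. \<forall>m\<ge>m0. \<forall>N\<in>Mod. \<forall>Q\<in>ramsey_patterns l L k. \<forall>h.
     inj_on h ({..<l} \<times> {..<m}) \<and> h ` ({..<l} \<times> {..<m}) \<subseteq> verts N \<and>
     grid_uniform L k N Q l m h \<longrightarrow> Q \<notin> U_fam l L k F"
proof -
  have "finite (ramsey_patterns l L k)"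
    using lang_ok by (intro finite_ramsey_patterns) (simp add: lang_ok_def)
  then obtain m0 where m0: "\<forall>Q\<in>ramsey_patterns l L k. Q \<in> U_fam l L k F \<longrightarrow>
      (\<exists>M\<in>F. \<exists>f r. split_order l (verts M) f r \<and> uniform L k M Q f r \<and> card (verts M) \<le> m0)"
    by (rule exE[OF U_fam_witness_bound])
  have "Q \<notin> U_fam l L k F"
    if m: "m0 \<le> m" and N: "N \<in> Mod" and Q: "Q \<in> ramsey_patterns l L k"
      and h: "inj_on h ({..<l} \<times> {..<m})" "h ` ({..<l} \<times> {..<m}) \<subseteq> verts N"
      and gu: "grid_uniform L k N Q l m h" for N h Q m
  proof
    assume "Q \<in> U_fam l L k F"
    then obtain M f r where M: "M \<in> F" "split_order l (verts M) f r" "uniform L k M Q f r"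
      "card (verts M) \<le> m0"
      using m0 Q by blast
    then have "card (verts M) \<le> m"
      using m by simp
    moreover have "canonical L k N"
      using N Mod_eq by (simp add: Forb_def)
    ultimately obtain U where "U \<subseteq> verts N" "iso (induced N U) M"
      using grid_uniform_embeds[OF _ _ M(2,3) _ h gu] M(1) F_canonical by blast
    then show False
      using N M(1) Mod_eq by (auto simp: Forb_def)
  qed
  then show ?thesis
    by blast
qed

lemma turan_embeds_if_pattern_not_in_U_fam:
  assumes "p \<ge> 1" and Q: "Q \<in> ramsey_patterns p L k" "Q \<notin> U_fam p L k F"
    and edges: "\<And>n i j. turan_edge n l i j \<Longrightarrow> pull (mod_colour p) (mod_order p n) [i, j] \<in> Q E"
  shows "turan_embeds Mod (QAtom E [0, 1]) l"
  unfolding turan_embeds_def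
proof
  fix n
  have "uniform_struc L k p n Q \<in> Mod"
    unfolding Mod_eq using split_order_mod[OF \<open>p \<ge> 1\<close>]
    by (intro uniform_in_Forb[OF Q F_canonical canonical_uniform_struc _ uniform_uniform_struc]) simp
  moreover have "turan_sub n l (QAtom E [0, 1]) (uniform_struc L k p n Q)"
    unfolding turan_sub_def
  proof (intro exI[of _ id] conjI allI impI)
    fix i j assume ij: "turan_edge n l i j"
    then have "i < n" "j < n" "i \<noteq> j"
      by (auto simp: turan_edge_def)
    then show "interp_edge (QAtom E [0, 1]) (uniform_struc L k p n Q) (id i) (id j)"
      using edges[OF ij] pair_in_uniform_struc[where L = L and k = k, OF E_in_L arity_E]
      by (simp add: interp_edge_def asg_def)
  qed auto
  ultimately show "\<exists>N\<in>Mod. card (verts N) = n \<and> turan_sub n l (QAtom E [0, 1]) N"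
    by (intro bexI[of _ "uniform_struc L k p n Q"]) simp_all
qed

lemma turan_embeds_if_turan_pattern_not_in_U_fam:
  assumes "l \<ge> 1" "Q \<in> turan_patterns l L k E" "Q \<notin> U_fam l L k F"
  shows "turan_embeds Mod (QAtom E [0, 1]) l"
proof (rule turan_embeds_if_pattern_not_in_U_fam[OF \<open>l \<ge> 1\<close> _ assms(3)])
  show "Q \<in> ramsey_patterns l L k"
    using assms(2) by (simp add: turan_patterns_def)
  fix n i j assume "turan_edge n l i j"
  then have tuple: "[i, j] \<in> inj_tuples {..<n} 2" and colours: "mod_colour l i \<noteq> mod_colour l j"
    by (auto simp: turan_edge_def inj_tuples_def mod_colour_def)
  have "pull (mod_colour l) (mod_order l n) [i, j] \<in> S l 2"
    by (rule pull_in_S[OF split_order_mod[OF \<open>l \<ge> 1\<close>] tuple])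
  then show "pull (mod_colour l) (mod_order l n) [i, j] \<in> Q E"
    using assms(2) colours by (auto simp: turan_patterns_def inj_on_less_2_iff pull_def)
qed

lemma turan_embeds_if_complete_pattern_not_in_U_fam:
  assumes "l \<ge> 1" "Q \<in> complete_patterns L k E" "Q \<notin> U_fam 1 L k F"
  shows "turan_embeds Mod (QAtom E [0, 1]) l"
proof (rule turan_embeds_if_pattern_not_in_U_fam[of 1 _ l, OF _ _ assms(3)])
  show "Q \<in> ramsey_patterns 1 L k"
    using assms(2) by (simp add: complete_patterns_def)
  fix n i j assume "turan_edge n l i j"
  then have "[i, j] \<in> inj_tuples {..<n} 2"
    by (auto simp: turan_edge_def inj_tuples_def)
  then have "pull (mod_colour 1) (mod_order 1 n) [i, j] \<in> S 1 2"
    by (rule pull_in_S[OF split_order_mod[OF order_refl]])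
  then show "pull (mod_colour 1) (mod_order 1 n) [i, j] \<in> Q E"
    using assms(2) by (simp add: complete_patterns_def)
qed simp

lemma grid_uniform_complete_pattern:
  assumes Q: "Q \<in> ramsey_patterns 1 L k" and "2 \<le> m" and gu: "grid_uniform L k N Q 1 m h"
    and edge: "\<And>a b. a \<in> {..<1} \<times> {..<m} \<Longrightarrow> b \<in> {..<1} \<times> {..<m} \<Longrightarrow> a \<noteq> b \<Longrightarrow> [h a, h b] \<in> rels N E"
  shows "Q \<in> complete_patterns L k E"
proof -
  have "S 1 2 \<subseteq> Q E"
  proof
    fix \<tau> assume "\<tau> \<in> S 1 2"
    then obtain a b where ab: "[a, b] \<in> grid_tuples 1 m 2" "grid_pattern [a, b] = \<tau>"
      using grid_pattern_pair_surj \<open>2 \<le> m\<close> by blast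
    then have "[h a, h b] \<in> rels N E"
      using edge by (auto simp: grid_tuples_def)
    then show "\<tau> \<in> Q E"
      using grid_uniform_E_iff[OF gu ab(1)] ab(2) by simp
  qed
  then have "Q E = S 1 2"
    using pattern_E_subset[OF Q] by blast
  then show ?thesis
    using Q by (simp add: complete_patterns_def)
qed

lemma E_clique_bound:
  assumes complete: "complete_patterns L k E \<subseteq> U_fam 1 L k F"
  shows "\<exists>K. \<forall>N\<in>Mod. \<forall>A. E_clique N A \<longrightarrow> card A < K"
proof -
  obtain m0 where m0: "\<forall>m\<ge>m0. \<forall>N\<in>Mod. \<forall>Q\<in>ramsey_patterns 1 L k. \<forall>h.
      inj_on h ({..<1} \<times> {..<m}) \<and> h ` ({..<1} \<times> {..<m}) \<subseteq> verts N \<and>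
      grid_uniform L k N Q 1 m h \<longrightarrow> Q \<notin> U_fam 1 L k F"
    by (rule exE[OF large_grid_pattern_not_in_U_fam])
  define m where "m = max m0 2"
  obtain R where R: "\<forall>(N :: 'q struc) (e :: nat \<Rightarrow> nat \<Rightarrow> nat). \<exists>Q\<in>ramsey_patterns 1 L k. \<exists>\<sigma>.
      \<sigma> ` ({..<1} \<times> {..<m}) \<subseteq> {..<R} \<and> inj_on \<sigma> ({..<1} \<times> {..<m}) \<and>
      grid_uniform L k N Q 1 m (\<lambda>q. e (fst q) (\<sigma> q))"
    by (rule exE[OF ramsey_grid[OF lang_ok]])
  show ?thesis
  proof (intro exI[of _ R] ballI allI impI, rule ccontr)
    fix N A assume N: "N \<in> Mod" and clique: "E_clique N A" and "\<not> card A < R"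
    have A_V: "A \<subseteq> verts N"
      using clique by (simp add: E_clique_def)
    moreover have "finite (verts N)"
      using N Mod_eq by (simp add: Forb_def canonical_def)
    ultimately have "finite A"
      by (rule finite_subset)
    then obtain g where g: "inj_on g {..<R}" "g ` {..<R} \<subseteq> A"
      using card_le_inj[of "{..<R}" A] \<open>\<not> card A < R\<close> by (auto simp: not_less)
    obtain Q \<sigma> where Q: "Q \<in> ramsey_patterns 1 L k" and \<sigma>: "\<sigma> ` ({..<1} \<times> {..<m}) \<subseteq> {..<R}"
      "inj_on \<sigma> ({..<1} \<times> {..<m})" and gu: "grid_uniform L k N Q 1 m (\<lambda>q. g (\<sigma> q))"
      using R[rule_format, of N "\<lambda>c s. g s"] by blast
    have h_inj: "inj_on (\<lambda>q. g (\<sigma> q)) ({..<1} \<times> {..<m})"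
      using comp_inj_on[OF \<sigma>(2) inj_on_subset[OF g(1) \<sigma>(1)]] by (simp add: comp_def)
    have h_A: "(\<lambda>q. g (\<sigma> q)) ` ({..<1} \<times> {..<m}) \<subseteq> A"
      using \<sigma>(1) g(2) by blast
    have edge: "[g (\<sigma> a), g (\<sigma> b)] \<in> rels N E"
      if "a \<in> {..<1} \<times> {..<m}" "b \<in> {..<1} \<times> {..<m}" "a \<noteq> b" for a b
    proof -
      have "g (\<sigma> a) \<in> A" "g (\<sigma> b) \<in> A" "g (\<sigma> a) \<noteq> g (\<sigma> b)"
        using that h_A inj_onD[OF h_inj] by auto
      then show ?thesis
        using clique by (simp add: E_clique_def)
    qed
    have "2 \<le> m"
      by (simp add: m_def)
    then have "Q \<in> complete_patterns L k E"
      using gu edge by (rule grid_uniform_complete_pattern[OF Q])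
    moreover have "Q \<notin> U_fam 1 L k F"
      using m0[rule_format, of m N Q "\<lambda>q. g (\<sigma> q)"] N Q h_inj gu h_A A_V by (simp add: m_def)
    ultimately show False
      using complete by blast
  qed
qed

text \<open>In a grid of edges the pattern of a pair of points in one column depends only on their
  order, so a single edge inside a column makes the whole column a clique.\<close>

lemma grid_uniform_column_clique:
  assumes N: "N \<in> Mod" and h_V: "h ` ({..<l} \<times> {..<m}) \<subseteq> verts N" and gu: "grid_uniform L k N Q l m h"
    and ab: "[a, b] \<in> grid_tuples l m 2" "fst a = fst b" "[h a, h b] \<in> rels N E"
  shows "E_clique N (h ` ({fst a} \<times> {..<m}))"
proof -
  have sym: "[h x, h y] \<in> rels N E \<Longrightarrow> [h y, h x] \<in> rels N E" for x y
    using E_sym N by blast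
  obtain a' b' where a'b': "[a', b'] \<in> grid_tuples l m 2" "fst a' = fst a" "fst b' = fst a"
    "snd a' < snd b'" "[h a', h b'] \<in> rels N E"
  proof (cases "snd a < snd b")
    case True
    show thesis
      by (rule that[of a b]) (use ab True in auto)
  next
    case False
    have "a \<noteq> b"
      using ab(1) by (simp add: grid_tuples_def)
    then have less: "snd b < snd a"
      using ab(2) False by (simp add: prod_eq_iff)
    have "[b, a] \<in> grid_tuples l m 2"
      using ab(1) by (auto simp: grid_tuples_def)
    moreover have "[h b, h a] \<in> rels N E"
      using sym ab(3) .
    ultimately show thesis
      using ab(2) less by (intro that[of b a]) simp_all
  qed
  have column_edge: "[h (fst a, s), h (fst a, s')] \<in> rels N E" if "s < s'" "s' < m" for s s'
  proof -
    have column: "[(fst a, s), (fst a, s')] \<in> grid_tuples l m 2"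
      using that ab(1) by (auto simp: grid_tuples_def)
    moreover have "grid_pattern [(fst a, s), (fst a, s')] = grid_pattern [a', b']"
      using a'b'(2-4) that by (intro grid_pattern_same_column) auto
    ultimately show ?thesis
      using grid_uniform_E_iff[OF gu column] grid_uniform_E_iff[OF gu a'b'(1)] a'b'(5) by simp
  qed
  show ?thesis
    unfolding E_clique_def
  proof (intro conjI ballI impI)
    have "{fst a} \<times> {..<m} \<subseteq> {..<l} \<times> {..<m}"
      using ab(1) by (auto simp: grid_tuples_def)
    then show "h ` ({fst a} \<times> {..<m}) \<subseteq> verts N"
      using h_V by blast
    fix x y assume "x \<in> h ` ({fst a} \<times> {..<m})" "y \<in> h ` ({fst a} \<times> {..<m})" "x \<noteq> y"
    then obtain s s' where "x = h (fst a, s)" "y = h (fst a, s')" "s < m" "s' < m" "s \<noteq> s'"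
      by auto
    then show "[x, y] \<in> rels N E"
      using column_edge sym by (cases s s' rule: linorder_cases) auto
  qed
qed

lemma grid_uniform_turan_pattern:
  assumes Q: "Q \<in> ramsey_patterns l L k" and "2 \<le> m" and gu: "grid_uniform L k N Q l m h"
    and cross: "\<And>a b. a \<in> {..<l} \<times> {..<m} \<Longrightarrow> b \<in> {..<l} \<times> {..<m} \<Longrightarrow> fst a \<noteq> fst b \<Longrightarrow>
      [h a, h b] \<in> rels N E"
    and inner: "\<And>a b. [a, b] \<in> grid_tuples l m 2 \<Longrightarrow> fst a = fst b \<Longrightarrow> [h a, h b] \<notin> rels N E"
  shows "Q \<in> turan_patterns l L k E"
proof -
  have "\<tau> \<in> Q E \<longleftrightarrow> inj_on (fst \<tau>) {..<2}" if \<tau>: "\<tau> \<in> S l 2" for \<tau>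
  proof -
    obtain a b where ab: "[a, b] \<in> grid_tuples l m 2" "grid_pattern [a, b] = \<tau>"
      using grid_pattern_pair_surj[OF \<tau> \<open>2 \<le> m\<close>] by blast
    have "a \<in> {..<l} \<times> {..<m}" "b \<in> {..<l} \<times> {..<m}"
      using ab(1) by (auto simp: grid_tuples_def)
    then have "[h a, h b] \<in> rels N E \<longleftrightarrow> fst a \<noteq> fst b"
      using cross inner[OF ab(1)] by blast
    then show ?thesis
      using grid_uniform_E_iff[OF gu ab(1)] ab(2) grid_pattern_pair_colours[of a b]
      by (auto simp: inj_on_less_2_iff)
  qed
  then have "Q E = {\<tau> \<in> S l 2. inj_on (fst \<tau>) {..<2}}"
    using pattern_E_subset[OF Q] by blast
  also have "\<dots> = {(g, r) \<in> S l 2. inj_on g {..<2}}"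
    by auto
  finally show ?thesis
    using Q by (simp add: turan_patterns_def)
qed

lemma not_turan_embeds_above_level:
  assumes "l \<ge> 1" and turan: "turan_patterns l L k E \<subseteq> U_fam l L k F"
    and complete: "complete_patterns L k E \<subseteq> U_fam 1 L k F" and "l \<le> l'"
  shows "\<not> turan_embeds Mod (QAtom E [0, 1]) l'"
proof
  assume embeds: "turan_embeds Mod (QAtom E [0, 1]) l'"
  obtain K where K: "\<forall>N\<in>Mod. \<forall>A. E_clique N A \<longrightarrow> card A < K"
    using E_clique_bound[OF complete] by blast
  obtain m0 where m0: "\<forall>m\<ge>m0. \<forall>N\<in>Mod. \<forall>Q\<in>ramsey_patterns l L k. \<forall>h.
      inj_on h ({..<l} \<times> {..<m}) \<and> h ` ({..<l} \<times> {..<m}) \<subseteq> verts N \<and>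
      grid_uniform L k N Q l m h \<longrightarrow> Q \<notin> U_fam l L k F"
    by (rule exE[OF large_grid_pattern_not_in_U_fam])
  define m where "m = max (max m0 K) 2"
  obtain R where R: "\<forall>(N :: 'q struc) (e :: nat \<Rightarrow> nat \<Rightarrow> nat). \<exists>Q\<in>ramsey_patterns l L k. \<exists>\<sigma>.
      \<sigma> ` ({..<l} \<times> {..<m}) \<subseteq> {..<R} \<and> inj_on \<sigma> ({..<l} \<times> {..<m}) \<and>
      grid_uniform L k N Q l m (\<lambda>q. e (fst q) (\<sigma> q))"
    by (rule exE[OF ramsey_grid[OF lang_ok]])
  obtain N where N: "N \<in> Mod" and "turan_sub (R * l') l' (QAtom E [0, 1]) N"
    using embeds unfolding turan_embeds_def by blast
  then obtain g where g: "inj_on g {..<R * l'}" "g ` {..<R * l'} \<subseteq> verts N"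
    and g_edge: "\<And>i j. turan_edge (R * l') l' i j \<Longrightarrow> interp_edge (QAtom E [0, 1]) N (g i) (g j)"
    by (auto simp: turan_sub_def)
  obtain Q \<sigma> where Q: "Q \<in> ramsey_patterns l L k" and \<sigma>: "\<sigma> ` ({..<l} \<times> {..<m}) \<subseteq> {..<R}"
    "inj_on \<sigma> ({..<l} \<times> {..<m})" and gu: "grid_uniform L k N Q l m (\<lambda>q. g (grid_index l' (\<sigma> q, fst q)))"
    using R[rule_format, of N "\<lambda>c s. g (grid_index l' (s, c))"] by blast
  define h where "h = (\<lambda>q. g (grid_index l' (\<sigma> q, fst q)))"
  note \<iota> = turan_grid_index[OF \<sigma> \<open>l \<le> l'\<close>]
  have h_inj: "inj_on h ({..<l} \<times> {..<m})"
    using comp_inj_on[OF \<iota>(1) inj_on_subset[OF g(1) \<iota>(2)]] by (simp add: h_def comp_def)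
  have h_V: "h ` ({..<l} \<times> {..<m}) \<subseteq> verts N"
    using \<iota>(2) g(2) unfolding h_def by blast
  have gu': "grid_uniform L k N Q l m h"
    using gu by (simp add: h_def)
  have cross: "[h a, h b] \<in> rels N E"
    if "a \<in> {..<l} \<times> {..<m}" "b \<in> {..<l} \<times> {..<m}" "fst a \<noteq> fst b" for a b
    using g_edge[OF \<iota>(3)[OF that]] by (simp add: h_def interp_edge_def asg_def)
  have "2 \<le> m"
    by (simp add: m_def)
  show False
  proof (cases "\<exists>a b. [a, b] \<in> grid_tuples l m 2 \<and> fst a = fst b \<and> [h a, h b] \<in> rels N E")
    case True
    then obtain a b where ab: "[a, b] \<in> grid_tuples l m 2" "fst a = fst b" "[h a, h b] \<in> rels N E"
      by blast
    have "inj_on h ({fst a} \<times> {..<m})"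
      by (rule inj_on_subset[OF h_inj]) (use ab(1) in \<open>auto simp: grid_tuples_def\<close>)
    then have "card (h ` ({fst a} \<times> {..<m})) = m"
      by (simp add: card_image card_cartesian_product)
    moreover have "card (h ` ({fst a} \<times> {..<m})) < K"
      using K N grid_uniform_column_clique[OF N h_V gu' ab] by blast
    ultimately show False
      by (simp add: m_def)
  next
    case False
    have "m0 \<le> m"
      by (simp add: m_def)
    then have "Q \<notin> U_fam l L k F"
      using m0 N Q h_inj h_V gu' by blast
    moreover have "Q \<in> turan_patterns l L k E"
      using grid_uniform_turan_pattern[OF Q \<open>2 \<le> m\<close> gu' cross] False by blast
    ultimately show False
      using turan by blast
  qed
qed

lemma turan_level_exists:
  assumes complete: "complete_patterns L k E \<subseteq> U_fam 1 L k F"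
  shows "\<exists>l\<ge>1. turan_patterns l L k E \<subseteq> U_fam l L k F"
proof (rule ccontr)
  assume none: "\<not> (\<exists>l\<ge>1. turan_patterns l L k E \<subseteq> U_fam l L k F)"
  obtain K where K: "\<forall>N\<in>Mod. \<forall>A. E_clique N A \<longrightarrow> card A < K"
    using E_clique_bound[OF complete] by blast
  define l where "l = max K 1"
  have "\<not> turan_patterns l L k E \<subseteq> U_fam l L k F"
    using none by (simp add: l_def)
  then obtain Q where "Q \<in> turan_patterns l L k E" "Q \<notin> U_fam l L k F"
    by blast
  then have "turan_embeds Mod (QAtom E [0, 1]) l"
    by (intro turan_embeds_if_turan_pattern_not_in_U_fam) (auto simp: l_def)
  then obtain N where N: "N \<in> Mod" and "turan_sub l l (QAtom E [0, 1]) N"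
    unfolding turan_embeds_def by blast
  then obtain g where g: "inj_on g {..<l}" "g ` {..<l} \<subseteq> verts N"
    and g_edge: "\<And>i j. turan_edge l l i j \<Longrightarrow> interp_edge (QAtom E [0, 1]) N (g i) (g j)"
    by (auto simp: turan_sub_def)
  text \<open>\<open>T\<^sub>l\<^sub>,\<^sub>l\<close> is the complete graph on \<open>l\<close> vertices.\<close>
  have "E_clique N (g ` {..<l})"
    unfolding E_clique_def
  proof (intro conjI ballI impI)
    show "g ` {..<l} \<subseteq> verts N"
      by (rule g(2))
    fix x y assume "x \<in> g ` {..<l}" "y \<in> g ` {..<l}" "x \<noteq> y"
    then obtain i j where "i < l" "j < l" "i \<noteq> j" "x = g i" "y = g j"
      by auto
    then show "[x, y] \<in> rels N E"
      using g_edge[of i j] by (simp add: turan_edge_def interp_edge_def asg_def)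
  qed
  then have "card (g ` {..<l}) < K"
    using K N by blast
  moreover have "card (g ` {..<l}) = l"
    using g(1) by (simp add: card_image)
  moreover have "K \<le> l"
    by (simp add: l_def)
  ultimately show False
    by linarith
qed

theorem chi_forb_edge_theory:
  shows "(\<not> complete_patterns L k E \<subseteq> U_fam 1 L k F \<longrightarrow> chi Mod (QAtom E [0, 1]) = \<infinity>) \<and>
         (complete_patterns L k E \<subseteq> U_fam 1 L k F \<longrightarrow>
            (\<exists>l\<ge>1. turan_patterns l L k E \<subseteq> U_fam l L k F) \<and>
            chi Mod (QAtom E [0, 1]) = enat (LEAST l. l \<ge> 1 \<and> turan_patterns l L k E \<subseteq> U_fam l L k F))"
proof (intro conjI impI)
  assume "\<not> complete_patterns L k E \<subseteq> U_fam 1 L k F"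
  then obtain Q where "Q \<in> complete_patterns L k E" "Q \<notin> U_fam 1 L k F"
    by blast
  then show "chi Mod (QAtom E [0, 1]) = \<infinity>"
    by (intro chi_eq_infinity turan_embeds_if_complete_pattern_not_in_U_fam)
next
  assume complete: "complete_patterns L k E \<subseteq> U_fam 1 L k F"
  then show level: "\<exists>l\<ge>1. turan_patterns l L k E \<subseteq> U_fam l L k F"
    by (rule turan_level_exists)
  define l0 where "l0 = (LEAST l. l \<ge> 1 \<and> turan_patterns l L k E \<subseteq> U_fam l L k F)"
  have l0: "l0 \<ge> 1" "turan_patterns l0 L k E \<subseteq> U_fam l0 L k F"
    using LeastI_ex[OF level] by (auto simp: l0_def)
  have "turan_embeds Mod (QAtom E [0, 1]) l \<longleftrightarrow> l < l0" if "l \<ge> 1" for l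
  proof
    assume "turan_embeds Mod (QAtom E [0, 1]) l"
    then show "l < l0"
      using not_turan_embeds_above_level[OF l0 complete] by (meson not_less)
  next
    assume "l < l0"
    then have "\<not> turan_patterns l L k E \<subseteq> U_fam l L k F"
      using not_less_Least[of l "\<lambda>l. l \<ge> 1 \<and> turan_patterns l L k E \<subseteq> U_fam l L k F"] that
      by (auto simp: l0_def)
    then show "turan_embeds Mod (QAtom E [0, 1]) l"
      using turan_embeds_if_turan_pattern_not_in_U_fam[OF that] by blast
  qed
  then show "chi Mod (QAtom E [0, 1]) = enat l0"
    using chi_eq_enat l0(1) by blast
qed

end

section \<open>Open interpretations\<close>

definition expand :: "'p qf \<Rightarrow> 'p struc \<Rightarrow> 'p option struc" where
  "expand \<phi> N = \<lparr>verts = verts N, rels = (\<lambda>p. case p of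
      None \<Rightarrow> {[x, y] | x y. x \<in> verts N \<and> y \<in> verts N \<and> x \<noteq> y \<and> qf_sat N (asg x y) \<phi>}
    | Some P \<Rightarrow> rels N P)\<rparr>"

lemma reduct_expand [simp]: "reduct (expand \<phi> N) = N"
  by (simp add: reduct_def expand_def)

lemma expand_in_Tprime_models:
  assumes T: "canon_theory L k Mod" and I: "open_interp L k Mod \<phi>" and N: "N \<in> Mod"
  shows "expand \<phi> N \<in> Tprime_models L k Mod \<phi>"
proof -
  have N_can: "canonical L k N"
    using T N by (simp add: canon_theory_def)
  have sym: "\<forall>x\<in>verts N. \<forall>y\<in>verts N. qf_sat N (asg x y) \<phi> \<longleftrightarrow> qf_sat N (asg y x) \<phi>"
    and irrefl: "\<forall>x\<in>verts N. \<not> qf_sat N (asg x x) \<phi>"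
    using I N by (auto simp: open_interp_def)
  have "canonical (lang' L) (arity' k) (expand \<phi> N)"
    unfolding canonical_def
  proof (intro conjI ballI allI impI)
    show "finite (verts (expand \<phi> N))"
      using N_can by (simp add: expand_def canonical_def)
  next
    fix p assume p: "p \<in> lang' L"
    show "rels (expand \<phi> N) p \<subseteq> inj_tuples (verts (expand \<phi> N)) (arity' k p)"
    proof (cases p)
      case None
      then show ?thesis
        by (auto simp: expand_def inj_tuples_def arity'_def)
    next
      case (Some P)
      then show ?thesis
        using p N_can by (auto simp: expand_def canonical_def arity'_def lang'_def)
    qed
  next
    fix p assume "p \<notin> lang' L"
    then obtain P where "p = Some P" "P \<notin> L"
      by (cases p) (auto simp: lang'_def)
    then show "rels (expand \<phi> N) p = {}"
      using N_can by (simp add: expand_def canonical_def)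
  qed
  moreover have "\<forall>x y. [x, y] \<in> rels (expand \<phi> N) None \<longrightarrow> [y, x] \<in> rels (expand \<phi> N) None"
    using sym by (auto simp: expand_def)
  moreover have "\<forall>x\<in>verts (expand \<phi> N). \<forall>y\<in>verts (expand \<phi> N).
      [x, y] \<in> rels (expand \<phi> N) None \<longleftrightarrow> qf_sat (reduct (expand \<phi> N)) (asg x y) \<phi>"
    unfolding reduct_expand using irrefl by (auto simp: expand_def)
  ultimately show ?thesis
    using N by (simp add: Tprime_models_def)
qed

lemma chi_Tprime_models:
  assumes T: "canon_theory L k Mod" and I: "open_interp L k Mod \<phi>"
  shows "chi (Tprime_models L k Mod \<phi>) (QAtom None [0, 1]) = chi Mod \<phi>"
proof -
  have edge_reduct: "interp_edge (QAtom None [0, 1]) N' x y \<longleftrightarrow> interp_edge \<phi> (reduct N') x y"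
    if "N' \<in> Tprime_models L k Mod \<phi>" for N' x y
    using that by (auto simp: Tprime_models_def interp_edge_def asg_def reduct_def)
  have edge_expand: "interp_edge (QAtom None [0, 1]) (expand \<phi> N) x y \<longleftrightarrow> interp_edge \<phi> N x y" for N x y
    by (auto simp: interp_edge_def expand_def asg_def)
  have "(\<exists>N'\<in>Tprime_models L k Mod \<phi>. card (verts N') = n \<and> turan_sub n l (QAtom None [0, 1]) N') \<longleftrightarrow>
      (\<exists>N\<in>Mod. card (verts N) = n \<and> turan_sub n l \<phi> N)" for n l
  proof
    assume "\<exists>N'\<in>Tprime_models L k Mod \<phi>. card (verts N') = n \<and> turan_sub n l (QAtom None [0, 1]) N'"
    then obtain N' where N': "N' \<in> Tprime_models L k Mod \<phi>" "card (verts N') = n"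
      "turan_sub n l (QAtom None [0, 1]) N'"
      by blast
    moreover have "verts (reduct N') = verts N'"
      by (simp add: reduct_def)
    ultimately have "reduct N' \<in> Mod" "card (verts (reduct N')) = n" "turan_sub n l \<phi> (reduct N')"
      using edge_reduct[OF N'(1)] by (auto simp: Tprime_models_def turan_sub_def)
    then show "\<exists>N\<in>Mod. card (verts N) = n \<and> turan_sub n l \<phi> N"
      by blast
  next
    assume "\<exists>N\<in>Mod. card (verts N) = n \<and> turan_sub n l \<phi> N"
    then obtain N where "N \<in> Mod" "card (verts N) = n" "turan_sub n l \<phi> N"
      by blast
    then show "\<exists>N'\<in>Tprime_models L k Mod \<phi>. card (verts N') = n \<and> turan_sub n l (QAtom None [0, 1]) N'"
      using expand_in_Tprime_models[OF T I] edge_expand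
      by (intro bexI[of _ "expand \<phi> N"]) (auto simp: turan_sub_def expand_def)
  qed
  then show ?thesis
    by (simp add: chi_def)
qed

lemma forb_edge_theory_Tprime_models:
  assumes "canon_theory L k Mod" "\<forall>G\<in>F. canonical (lang' L) (arity' k) G"
    and "Tprime_models L k Mod \<phi> = Forb (lang' L) (arity' k) F"
  shows "forb_edge_theory (lang' L) (arity' k) None F (Tprime_models L k Mod \<phi>)"
  using assms
  by unfold_locales (auto simp: canon_theory_def lang_ok_def lang'_def arity'_def Tprime_models_def)

lemma chi_open_interpretation:
  assumes T: "canon_theory L k Mod" and I: "open_interp L k Mod \<phi>"
    and "\<forall>G\<in>F. canonical (lang' L) (arity' k) G" "Tprime_models L k Mod \<phi> = Forb (lang' L) (arity' k) F"
  shows "(\<not> complete_patterns (lang' L) (arity' k) None \<subseteq> U_fam 1 (lang' L) (arity' k) F \<longrightarrow>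
           chi Mod \<phi> = \<infinity>) \<and>
         (complete_patterns (lang' L) (arity' k) None \<subseteq> U_fam 1 (lang' L) (arity' k) F \<longrightarrow>
           (\<exists>l\<ge>1. turan_patterns l (lang' L) (arity' k) None \<subseteq> U_fam l (lang' L) (arity' k) F) \<and>
           chi Mod \<phi> = enat (LEAST l. l \<ge> 1 \<and>
              turan_patterns l (lang' L) (arity' k) None \<subseteq> U_fam l (lang' L) (arity' k) F))"
proof -
  interpret forb_edge_theory "lang' L" "arity' k" None F "Tprime_models L k Mod \<phi>"
    using assms by (intro forb_edge_theory_Tprime_models)
  show ?thesis
    using chi_forb_edge_theory chi_Tprime_models[OF T I] by simp
qed

lemma forb_edge_theoryI:
  "canon_theory L k Mod \<Longrightarrow> E \<in> L \<Longrightarrow> k E = 2 \<Longrightarrow>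
   \<forall>N\<in>Mod. \<forall>x y. [x, y] \<in> rels N E \<longrightarrow> [y, x] \<in> rels N E \<Longrightarrow> \<forall>G\<in>F. canonical L k G \<Longrightarrow>
   Mod = Forb L k F \<Longrightarrow> forb_edge_theory L k E F Mod"
  by unfold_locales (auto simp: canon_theory_def)

theorem theorem3p2:
  shows "(\<forall>(L :: 'p set) k Mod \<phi> (F :: 'p option struc set).
            canon_theory L k Mod \<and> open_interp L k Mod \<phi> \<and>
            (\<forall>G\<in>F. canonical (lang' L) (arity' k) G) \<and>
            Tprime_models L k Mod \<phi> = Forb (lang' L) (arity' k) F \<longrightarrow>
              (\<not> complete_patterns (lang' L) (arity' k) None \<subseteq> U_fam 1 (lang' L) (arity' k) F \<longrightarrow>
                 chi Mod \<phi> = \<infinity>) \<and>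
              (complete_patterns (lang' L) (arity' k) None \<subseteq> U_fam 1 (lang' L) (arity' k) F \<longrightarrow>
                 (\<exists>l\<ge>1. turan_patterns l (lang' L) (arity' k) None \<subseteq> U_fam l (lang' L) (arity' k) F) \<and>
                 chi Mod \<phi> = enat (LEAST l. l \<ge> 1 \<and>
                    turan_patterns l (lang' L) (arity' k) None \<subseteq> U_fam l (lang' L) (arity' k) F)))
       \<and>
       (\<forall>(L :: 'q set) k Mod (E :: 'q) (F :: 'q struc set).
            canon_theory L k Mod \<and> E \<in> L \<and> k E = 2 \<and>
            (\<forall>N\<in>Mod. \<forall>x y. [x, y] \<in> rels N E \<longrightarrow> [y, x] \<in> rels N E) \<and>
            (\<forall>G\<in>F. canonical L k G) \<and>
            Mod = Forb L k F \<longrightarrow>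
              (\<not> complete_patterns L k E \<subseteq> U_fam 1 L k F \<longrightarrow>
                 chi Mod (QAtom E [0, 1]) = \<infinity>) \<and>
              (complete_patterns L k E \<subseteq> U_fam 1 L k F \<longrightarrow>
                 (\<exists>l\<ge>1. turan_patterns l L k E \<subseteq> U_fam l L k F) \<and>
                 chi Mod (QAtom E [0, 1]) = enat (LEAST l. l \<ge> 1 \<and> turan_patterns l L k E \<subseteq> U_fam l L k F)))"
  by (rule conjI; intro allI impI; elim conjE)
    (fact chi_open_interpretation, fact forb_edge_theory.chi_forb_edge_theory[OF forb_edge_theoryI])

end
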